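(* Let $z_o\in\Xi_1$. The following are equivalent: (a) $\boldsymbol{\rho}_1(z_o)=\boldsymbol{0}$; (b) $\boldsymbol{\rho}_4\!\left(-\frac{u_o^2}{z_o}\right)=\boldsymbol{0}$; (c) there exists a nonzero constant $\varsigma_o$ with $\boldsymbol{\varphi}_{-,2}(z_o^* )=\varsigma_o\,\boldsymbol{\varphi}_{+,1}(z_o^* )$; (d) there exists a nonzero constant $\hat\varsigma_o$ with $\boldsymbol{\varphi}_{-,2}\!\left(-\frac{u_o^2}{z_o^*}\right)=\hat\varsigma_o\,\boldsymbol{\varphi}_{+,3}\!\left(-\frac{u_o^2}{z_o^*}\right)$.
   Context: Equation and potential. Let $u_o>0$ and $\alpha_1,\alpha_2\in\mathbb{R}$. Let $\boldsymbol{u}(x,t)=(u_1,u_2)^T$ solve $$i\boldsymbol{u}_t+\alpha_1\left[\boldsymbol{u}_{xx}+2\boldsymbol{u}(\|\boldsymbol{u}\|^2-u_o^2)\right]+i\alpha_2\left[\boldsymbol{u}_{xxx}+3\boldsymbol{u}_x\|\boldsymbol{u}\|^2+3\boldsymbol{u}\boldsymbol{u}^\dagger\boldsymbol{u}_x\right]=0,$$ with $\boldsymbol{u}\to\boldsymbol{u}_\pm=\boldsymbol{u}_oe^{ih_\pm}$ as $x\to\pm\infty$, where $h_\pm\in\mathbb{R}$ and $\|\boldsymbol{u}_o\|=u_o$. Assume $\boldsymbol{u}-\boldsymbol{u}_-\in L^1(-\infty,a)$ and $\boldsymbol{u}-\boldsymbol{u}_+\in L^1(a,\infty)$ for all $a$.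 Matrices. Set $$\boldsymbol{U}=\begin{pmatrix}0&-\boldsymbol{u}^\dagger\\ \boldsymbol{u}&0_{2\times2}\end{pmatrix},\qquad \boldsymbol{\sigma}=\mathrm{diag}(1,-1,-1).$$ Uniformization: $k=\frac12\left(z-\frac{u_o^2}{z}\right)$, $\lambda=\frac12\left(z+\frac{u_o^2}{z}\right)$. Lax pair: $$\boldsymbol{X}=-ik\boldsymbol{\sigma}+\boldsymbol{U},$$ $$\boldsymbol{T}=\alpha_1\left[2ik^2\boldsymbol{\sigma}-2k\boldsymbol{U}+i\boldsymbol{\sigma}(\boldsymbol{U}^2+u_o^2-\boldsymbol{U}_x)\right]+\alpha_2\left[-4ik^3\boldsymbol{\sigma}+4k^2\boldsymbol{U}+2ik\boldsymbol{\sigma}(\boldsymbol{U}_x-\boldsymbol{U}^2)-\boldsymbol{U}\boldsymbol{U}_x+\boldsymbol{U}_x\boldsymbol{U}-\boldsymbol{U}_{xx}+2\boldsymbol{U}^3\right].$$ The adjoint pair is $\tilde{\boldsymbol{X}}=-\boldsymbol{X}^T$, $\tilde{\boldsymbol{T}}=-\boldsymbol{T}^T$; that is, $\tilde{\boldsymbol{X}}=ik\boldsymbol{\sigma}+\boldsymbol{U}^*$, with $\tilde{\boldsymbol{T}}$ obtained from $\boldsymbol{T}$ accordingly. Phases: $$h_1=-\lambda x+2\lambda\left[\alpha_1k+\alpha_2(u_o^2-2k^2)\right]t,\qquad h_2=kx-\left[\alpha_1(k^2+\lambda^2)-4\alpha_2k^3\right]t,\qquad \boldsymbol{H}=\mathrm{diag}(h_1,h_2,-h_1).$$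 Eigenvector matrices. With $\boldsymbol{v}^\perp=(v_2^*,-v_1^* )^T$, $$\boldsymbol{G}_\pm(z)=\begin{pmatrix} i&0&u_o/z\\ -\boldsymbol{u}_\pm/z&\boldsymbol{u}_\pm^\perp/u_o&-i\boldsymbol{u}_\pm/u_o\end{pmatrix},\qquad \tilde{\boldsymbol{G}}_\pm(z)=(\boldsymbol{G}_\pm(z^* ))^*.$$ Continuous spectrum: $\Sigma=\mathbb{R}\cup\{|z|=u_o\}$. Jost solutions. For $z\in\Sigma\setminus\{\pm iu_o\}$: - $\boldsymbol{\varphi}_\pm$ solve $\boldsymbol{\varphi}_x=\boldsymbol{X}\boldsymbol{\varphi}$, $\boldsymbol{\varphi}_t=\boldsymbol{T}\boldsymbol{\varphi}$ with $\boldsymbol{\varphi}_\pm=\boldsymbol{G}_\pm e^{i\boldsymbol{H}}+o(1)$ as $x\to\pm\infty$; - $\tilde{\boldsymbol{\varphi}}_\pm$ solve the adjoint system with $\tilde{\boldsymbol{\varphi}}_\pm=\tilde{\boldsymbol{G}}_\pm e^{-i\boldsymbol{H}}+o(1)$. The $l$-th columns are denoted $\boldsymbol{\varphi}_{\pm,l}$ and $\tilde{\boldsymbol{\varphi}}_{\pm,l}$. Regions: - $\Xi_1=\{|z|>u_o,\ \mathrm{Im}\,z>0\}$, - $\Xi_2=\{|z|>u_o,\ \mathrm{Im}\,z<0\}$, - $\Xi_3=\{|z|<u_o,\ \mathrm{Im}\,z<0\}$, - $\Xi_4=\{|z|<u_o,\ \mathrm{Im}\,z>0\}$. Standing analyticity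 facts of the setting (the columns denote their analytic extensions): - $\boldsymbol{\varphi}_{-,1}$ extends to $\Xi_1$, $\boldsymbol{\varphi}_{-,2}$ to $\{\mathrm{Im}\,z<0\}$, $\boldsymbol{\varphi}_{-,3}$ to $\Xi_4$; - $\boldsymbol{\varphi}_{+,1}$ extends to $\Xi_2$, $\boldsymbol{\varphi}_{+,2}$ to $\{\mathrm{Im}\,z>0\}$, $\boldsymbol{\varphi}_{+,3}$ to $\Xi_3$; - $\tilde{\boldsymbol{\varphi}}_{+,1}$ extends to $\Xi_1$, $\tilde{\boldsymbol{\varphi}}_{+,2}$ to $\{\mathrm{Im}\,z<0\}$, $\tilde{\boldsymbol{\varphi}}_{+,3}$ to $\Xi_4$; - $\tilde{\boldsymbol{\varphi}}_{-,1}$ extends to $\Xi_2$, $\tilde{\boldsymbol{\varphi}}_{-,2}$ to $\{\mathrm{Im}\,z>0\}$, $\tilde{\boldsymbol{\varphi}}_{-,3}$ to $\Xi_3$. Auxiliary eigenfunctions. With $\times$ the bilinear cross product on $\mathbb{C}^3$: - $\boldsymbol{\rho}_1=e^{ih_2}[\tilde{\boldsymbol{\varphi}}_{+,1}\times\tilde{\boldsymbol{\varphi}}_{-,2}]$ on $\Xi_1$; - $\boldsymbol{\rho}_2=e^{ih_2}[\tilde{\boldsymbol{\varphi}}_{-,1}\times\tilde{\boldsymbol{\varphi}}_{+,2}]$ on $\Xi_2$; - $\boldsymbol{\rho}_3=e^{ih_2}[\tilde{\boldsymbol{\varphi}}_{+,2}\times\tilde{\boldsymbol{\varphi}}_{-,3}]$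 on $\Xi_3$; - $\boldsymbol{\rho}_4=e^{ih_2}[\tilde{\boldsymbol{\varphi}}_{-,2}\times\tilde{\boldsymbol{\varphi}}_{+,3}]$ on $\Xi_4$. Equalities are understood for all $x,t$, with constants independent of $x,t$. *)

theory Defs
  imports "HOL-Analysis.Analysis"
begin

text \<open>Complex 3-vectors are complex^3, 3x3 matrices are complex^3^3 (row-wise, A$i$j),
  the two-component field is complex^2 (its norm is the Euclidean norm).\<close>

definition kk :: "real \<Rightarrow> complex \<Rightarrow> complex" where
  "kk uo z = (z - complex_of_real (uo^2) / z) / 2"

definition ll :: "real \<Rightarrow> complex \<Rightarrow> complex" where
  "ll uo z = (z + complex_of_real (uo^2) / z) / 2"

definition ph1 :: "real \<Rightarrow> real \<Rightarrow> real \<Rightarrow> real \<Rightarrow> real \<Rightarrow> complex \<Rightarrow> complex" where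
  "ph1 a1 a2 uo x t z =
     - ll uo z * of_real x
     + 2 * ll uo z * (of_real a1 * kk uo z + of_real a2 * (of_real (uo^2) - 2 * (kk uo z)^2)) * of_real t"

definition ph2 :: "real \<Rightarrow> real \<Rightarrow> real \<Rightarrow> real \<Rightarrow> real \<Rightarrow> complex \<Rightarrow> complex" where
  "ph2 a1 a2 uo x t z =
     kk uo z * of_real x
     - (of_real a1 * ((kk uo z)^2 + (ll uo z)^2) - 4 * of_real a2 * (kk uo z)^3) * of_real t"

text \<open>Diagonal entries of H = diag(h1, h2, -h1), indexed by the column l.\<close>
definition phase :: "real \<Rightarrow> real \<Rightarrow> real \<Rightarrow> 3 \<Rightarrow> real \<Rightarrow> real \<Rightarrow> complex \<Rightarrow> complex" where
  "phase a1 a2 uo l x t z =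
     (if l = 1 then ph1 a1 a2 uo x t z
      else if l = 2 then ph2 a1 a2 uo x t z
      else - ph1 a1 a2 uo x t z)"

definition msc :: "complex \<Rightarrow> complex^3^3 \<Rightarrow> complex^3^3" (infixr \<open>*M\<close> 75) where
  "c *M A = (\<chi> i j. c * A $ i $ j)"

definition sigma3 :: "complex^3^3" where
  "sigma3 = vector [vector [1, 0, 0], vector [0, -1, 0], vector [0, 0, -1]]"

definition Umat :: "complex^2 \<Rightarrow> complex^3^3" where
  "Umat v = vector [vector [0, - cnj (v$1), - cnj (v$2)],
                    vector [v$1, 0, 0],
                    vector [v$2, 0, 0]]"

definition Xmat :: "real \<Rightarrow> complex^2 \<Rightarrow> complex \<Rightarrow> complex^3^3" where
  "Xmat uo v z = ((- \<i> * kk uo z) *M sigma3) + Umat v"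

text \<open>T, evaluated with U = Umat v, U_x = Umat vx, U_xx = Umat vxx.\<close>
definition Tmat :: "real \<Rightarrow> real \<Rightarrow> real \<Rightarrow> complex^2 \<Rightarrow> complex^2 \<Rightarrow> complex^2 \<Rightarrow> complex \<Rightarrow> complex^3^3" where
  "Tmat a1 a2 uo v vx vxx z =
     (let k = kk uo z; U = Umat v; Ux = Umat vx; Uxx = Umat vxx in
       of_real a1 *M ((2 * \<i> * k^2) *M sigma3 - (2 * k) *M U
                      + \<i> *M (sigma3 ** (U ** U + mat (of_real (uo^2)) - Ux)))
     + of_real a2 *M ((- 4 * \<i> * k^3) *M sigma3 + (4 * k^2) *M U
                      + (2 * \<i> * k) *M (sigma3 ** (Ux - U ** U))
                      - U ** Ux + Ux ** U - Uxx + 2 *M (U ** U ** U)))"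

definition vperp :: "complex^2 \<Rightarrow> complex^2" where
  "vperp v = vector [cnj (v$2), - cnj (v$1)]"

text \<open>G(z) for boundary value w = u_plus or u_minus.\<close>
definition Gmat :: "real \<Rightarrow> complex^2 \<Rightarrow> complex \<Rightarrow> complex^3^3" where
  "Gmat uo w z =
     vector [vector [\<i>, 0, of_real uo / z],
             vector [- w$1 / z, (vperp w)$1 / of_real uo, - \<i> * w$1 / of_real uo],
             vector [- w$2 / z, (vperp w)$2 / of_real uo, - \<i> * w$2 / of_real uo]]"

definition Gtmat :: "real \<Rightarrow> complex^2 \<Rightarrow> complex \<Rightarrow> complex^3^3" where
  "Gtmat uo w z = (\<chi> i j. cnj (Gmat uo w (cnj z) $ i $ j))"

definition col3 :: "3 \<Rightarrow> complex^3^3 \<Rightarrow> complex^3" where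
  "col3 l A = (\<chi> i. A $ i $ l)"

text \<open>Bilinear (not sesquilinear) cross product on C^3.\<close>
definition cross3c :: "complex^3 \<Rightarrow> complex^3 \<Rightarrow> complex^3" where
  "cross3c a b = vector [a$2 * b$3 - a$3 * b$2, a$3 * b$1 - a$1 * b$3, a$1 * b$2 - a$2 * b$1]"

definition Xi1 :: "real \<Rightarrow> complex set" where "Xi1 uo = {z. cmod z > uo \<and> Im z > 0}"
definition Xi2 :: "real \<Rightarrow> complex set" where "Xi2 uo = {z. cmod z > uo \<and> Im z < 0}"
definition Xi3 :: "real \<Rightarrow> complex set" where "Xi3 uo = {z. cmod z < uo \<and> Im z < 0}"
definition Xi4 :: "real \<Rightarrow> complex set" where "Xi4 uo = {z. cmod z < uo \<and> Im z > 0}"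

text \<open>The defocusing-type Hirota-Manakov equation with its solution hypotheses:
  u with x-derivatives ux, uxx, uxxx and t-derivative ut.\<close>
definition is_solution ::
  "real \<Rightarrow> real \<Rightarrow> real \<Rightarrow> (real \<Rightarrow> real \<Rightarrow> complex^2) \<Rightarrow> (real \<Rightarrow> real \<Rightarrow> complex^2)
   \<Rightarrow> (real \<Rightarrow> real \<Rightarrow> complex^2) \<Rightarrow> (real \<Rightarrow> real \<Rightarrow> complex^2) \<Rightarrow> (real \<Rightarrow> real \<Rightarrow> complex^2) \<Rightarrow> bool" where
  "is_solution a1 a2 uo u ux uxx uxxx ut \<longleftrightarrow>
     (\<forall>x t. ((\<lambda>y. u y t) has_vector_derivative ux x t) (at x)
          \<and> ((\<lambda>y. ux y t) has_vector_derivative uxx x t) (at x)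
          \<and> ((\<lambda>y. uxx y t) has_vector_derivative uxxx x t) (at x)
          \<and> ((\<lambda>s. u x s) has_vector_derivative ut x t) (at t)
          \<and> \<i> *s ut x t
            + of_real a1 *s (uxx x t + (2 * of_real ((norm (u x t))^2 - uo^2)) *s u x t)
            + (\<i> * of_real a2) *s (uxxx x t + (3 * of_real ((norm (u x t))^2)) *s ux x t
                 + (3 * (cnj (u x t $ 1) * ux x t $ 1 + cnj (u x t $ 2) * ux x t $ 2)) *s u x t)
            = 0)"

definition lax_sol ::
  "real \<Rightarrow> real \<Rightarrow> real \<Rightarrow> (real \<Rightarrow> real \<Rightarrow> complex^2) \<Rightarrow> (real \<Rightarrow> real \<Rightarrow> complex^2)
   \<Rightarrow> (real \<Rightarrow> real \<Rightarrow> complex^2) \<Rightarrow> complex \<Rightarrow> (real \<Rightarrow> real \<Rightarrow> complex^3) \<Rightarrow> bool" where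
  "lax_sol a1 a2 uo u ux uxx z f \<longleftrightarrow>
     (\<forall>x t. ((\<lambda>y. f y t) has_vector_derivative (Xmat uo (u x t) z *v f x t)) (at x)
          \<and> ((\<lambda>s. f x s) has_vector_derivative
                (Tmat a1 a2 uo (u x t) (ux x t) (uxx x t) z *v f x t)) (at t))"

definition adj_lax_sol ::
  "real \<Rightarrow> real \<Rightarrow> real \<Rightarrow> (real \<Rightarrow> real \<Rightarrow> complex^2) \<Rightarrow> (real \<Rightarrow> real \<Rightarrow> complex^2)
   \<Rightarrow> (real \<Rightarrow> real \<Rightarrow> complex^2) \<Rightarrow> complex \<Rightarrow> (real \<Rightarrow> real \<Rightarrow> complex^3) \<Rightarrow> bool" where
  "adj_lax_sol a1 a2 uo u ux uxx z f \<longleftrightarrow>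
     (\<forall>x t. ((\<lambda>y. f y t) has_vector_derivative (- transpose (Xmat uo (u x t) z) *v f x t)) (at x)
          \<and> ((\<lambda>s. f x s) has_vector_derivative
                (- transpose (Tmat a1 a2 uo (u x t) (ux x t) (uxx x t) z) *v f x t)) (at t))"

text \<open>Analytically extended Jost column l (of phi_pm), on the open region R:
  solves the Lax pair for every z in R, is holomorphic in z on R (componentwise), and
  exp(-i h_l) phi_l tends to the l-th column of G_pm as x \<rightarrow> \<plusminus>\<infinity> (filter F = at_top / at_bot).\<close>
definition jost_col ::
  "real \<Rightarrow> real \<Rightarrow> real \<Rightarrow> (real \<Rightarrow> real \<Rightarrow> complex^2) \<Rightarrow> (real \<Rightarrow> real \<Rightarrow> complex^2)
   \<Rightarrow> (real \<Rightarrow> real \<Rightarrow> complex^2) \<Rightarrow> complex^2 \<Rightarrow> real filter \<Rightarrow> 3 \<Rightarrow> complex set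
   \<Rightarrow> (real \<Rightarrow> real \<Rightarrow> complex \<Rightarrow> complex^3) \<Rightarrow> bool" where
  "jost_col a1 a2 uo u ux uxx w F l R phi \<longleftrightarrow>
     (\<forall>z\<in>R. lax_sol a1 a2 uo u ux uxx z (\<lambda>x t. phi x t z)
        \<and> (\<forall>t. ((\<lambda>x. exp (- \<i> * phase a1 a2 uo l x t z) *s phi x t z)
                 \<longlongrightarrow> col3 l (Gmat uo w z)) F))
     \<and> (\<forall>x t j. (\<lambda>z. phi x t z $ j) holomorphic_on R)"

definition adj_jost_col ::
  "real \<Rightarrow> real \<Rightarrow> real \<Rightarrow> (real \<Rightarrow> real \<Rightarrow> complex^2) \<Rightarrow> (real \<Rightarrow> real \<Rightarrow> complex^2)
   \<Rightarrow> (real \<Rightarrow> real \<Rightarrow> complex^2) \<Rightarrow> complex^2 \<Rightarrow> real filter \<Rightarrow> 3 \<Rightarrow> complex set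
   \<Rightarrow> (real \<Rightarrow> real \<Rightarrow> complex \<Rightarrow> complex^3) \<Rightarrow> bool" where
  "adj_jost_col a1 a2 uo u ux uxx w F l R phi \<longleftrightarrow>
     (\<forall>z\<in>R. adj_lax_sol a1 a2 uo u ux uxx z (\<lambda>x t. phi x t z)
        \<and> (\<forall>t. ((\<lambda>x. exp (\<i> * phase a1 a2 uo l x t z) *s phi x t z)
                 \<longlongrightarrow> col3 l (Gtmat uo w z)) F))
     \<and> (\<forall>x t j. (\<lambda>z. phi x t z $ j) holomorphic_on R)"

end

theory Submission
  imports Defs
begin

(* For z in Xi1, the adjoint columns at z and at -uo^2/z and the conjugates of the Jost columns
   at cnj z and at cnj (-uo^2/z) all solve the adjoint x-equation f' = -X(z)^T f, because
   conjugation turns X(cnj z) into -X(z)^T and X is invariant under z -> -uo^2/z. Such a solution is determined by its normalisation at one end: in the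
   eigenbasis of the limiting matrix its weighted modal components solve a system whose modes
   do not decay and whose perturbation is integrable, so a difference of two solutions with the
   same limit vanishes on a tail, and then everywhere by Gronwall's inequality. This identifies
   psi_{+,1}, psi_{-,2} at z with the conjugates of phi_{+,1}, phi_{-,2} at cnj z, and the columns
   at -uo^2/z with nonzero multiples of those at z. Hence rho_1(z) is the conjugate of
   phi_{+,1} x phi_{-,2} at cnj z, rho_4(-uo^2/z) is a nonzero multiple of rho_1(z), and the
   pair (phi_{+,3}, phi_{-,2}) at -uo^2/cnj z is a rescaling of (phi_{+,1}, phi_{-,2}) at cnj z.
   Finally, two solutions of the Lax pair have identically vanishing cross product iff they are
   proportional with a constant factor: proportionality at one point spreads in x by uniqueness
   for the x-equation, and the factor does not depend on t because both solve the t-equation. *)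

lemma matrix_vector_mult_uminus: "(- A) *v v = - (A *v v :: 'a::ring_1^'m)"
  by (simp add: matrix_vector_mult_def vec_eq_iff sum_negf)

lemma bounded_linear_vector_scalar_mult: "bounded_linear (\<lambda>v::complex^'n. c *s v)"
  by (intro linear_conv_bounded_linear[THEN iffD1] linearI) (simp_all add: vec_eq_iff algebra_simps)

lemma norm_vector_scalar_mult: "norm (c *s (v :: complex^'n)) = norm c * norm v"
  unfolding norm_vec_def L2_set_def
  by (simp add: norm_mult power_mult_distrib sum_distrib_left[symmetric] real_sqrt_mult)

lemma norm_matrix_vector_mult_le:
  fixes A :: "'a::real_normed_field^'n^'m"
  shows "norm (A *v v) \<le> (\<Sum>i\<in>UNIV. \<Sum>j\<in>UNIV. norm (A$i$j)) * norm v"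
proof -
  have "norm (A *v v) \<le> (\<Sum>i\<in>UNIV. norm ((A *v v)$i))"
    unfolding norm_vec_def by (rule L2_set_le_sum) simp
  also have "\<dots> \<le> (\<Sum>i\<in>UNIV. (\<Sum>j\<in>UNIV. norm (A$i$j)) * norm v)"
  proof (rule sum_mono)
    fix i
    have "norm ((A *v v)$i) \<le> (\<Sum>j\<in>UNIV. norm (A$i$j * v$j))"
      unfolding matrix_vector_mult_def by (simp add: norm_sum)
    also have "\<dots> \<le> (\<Sum>j\<in>UNIV. norm (A$i$j) * norm v)"
      unfolding norm_mult by (intro sum_mono mult_left_mono Finite_Cartesian_Product.norm_nth_le norm_ge_zero)
    finally show "norm ((A *v v)$i) \<le> (\<Sum>j\<in>UNIV. norm (A$i$j)) * norm v"
      by (simp add: sum_distrib_right)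
  qed
  finally show ?thesis by (simp add: sum_distrib_right)
qed

lemma ex_nonzero_proportional_rescale:
  fixes M P :: "'a \<Rightarrow> 'b \<Rightarrow> 'c::field^'n"
  assumes "a \<noteq> 0"
  shows "(\<exists>c. c \<noteq> 0 \<and> (\<forall>x t. M x t = c *s P x t)) \<longleftrightarrow> (\<exists>c. c \<noteq> 0 \<and> (\<forall>x t. M x t = c *s (a *s P x t)))"
proof
  assume "\<exists>c. c \<noteq> 0 \<and> (\<forall>x t. M x t = c *s P x t)"
  then obtain c where "c \<noteq> 0" "\<And>x t. M x t = c *s P x t" by blast
  with assms show "\<exists>c. c \<noteq> 0 \<and> (\<forall>x t. M x t = c *s (a *s P x t))"
    by (intro exI[of _ "c / a"]) (simp add: vector_smult_assoc)
next
  assume "\<exists>c. c \<noteq> 0 \<and> (\<forall>x t. M x t = c *s (a *s P x t))"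
  then obtain c where "c \<noteq> 0" "\<And>x t. M x t = c *s (a *s P x t)" by blast
  with assms show "\<exists>c. c \<noteq> 0 \<and> (\<forall>x t. M x t = c *s P x t)"
    by (intro exI[of _ "c * a"]) (simp add: vector_smult_assoc)
qed

definition pairing :: "'a::comm_semiring_0^'n \<Rightarrow> 'a^'n \<Rightarrow> 'a" where
  "pairing l v = (\<Sum>i\<in>UNIV. l$i * v$i)"

lemma bounded_linear_pairing: "bounded_linear (pairing (l :: complex^'n))"
  by (intro linear_conv_bounded_linear[THEN iffD1] linearI)
     (simp_all add: pairing_def sum.distrib algebra_simps scaleR_sum_right)

lemma pairing_scale: "pairing l (c *s v) = c * pairing l v"
  by (simp add: pairing_def sum_distrib_left algebra_simps)

lemma pairing_diff: "pairing (l :: 'a::comm_ring^'n) (v - w) = pairing l v - pairing l w"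
  by (simp add: pairing_def sum_subtractf algebra_simps)

lemma pairing_minus: "pairing (l :: 'a::comm_ring^'n) (- v) = - pairing l v"
  by (simp add: pairing_def sum_negf)

lemma pairing_sum: "pairing l (\<Sum>i\<in>I. v i) = (\<Sum>i\<in>I. pairing l (v i))"
  unfolding pairing_def by (simp add: sum_component sum_distrib_left) (rule sum.swap)

lemma pairing_zero [simp]: "pairing l 0 = 0"
  by (simp add: pairing_def)

lemma pairing_matrix_vector_mult: "pairing l (E *v v) = pairing (l v* E) v"
  unfolding pairing_def matrix_vector_mult_def vector_matrix_mult_def
  by (simp add: sum_distrib_left sum_distrib_right mult.assoc) (rule sum.swap)

lemma pairing_matrix_vector_mult_sum:
  fixes E :: "'a::field^'n^'n"
  shows "pairing l (E *v (\<Sum>i\<in>UNIV. a i *s r i)) = (\<Sum>i\<in>UNIV. a i * pairing l (E *v r i))"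
  by (simp add: pairing_matrix_vector_mult pairing_sum pairing_scale)

lemma norm_pairing_matrix_vector_mult_le:
  fixes E :: "complex^'n^'n"
  assumes "\<And>i j. norm (E$i$j) \<le> \<delta>"
  shows "norm (pairing l (E *v r)) \<le> (\<Sum>i\<in>UNIV. norm (l$i)) * (\<Sum>j\<in>UNIV. norm (r$j)) * \<delta>"
proof -
  have "norm (pairing l (E *v r)) = norm (\<Sum>i\<in>UNIV. \<Sum>j\<in>UNIV. l$i * E$i$j * r$j)"
    by (simp add: pairing_def matrix_vector_mult_def sum_distrib_left mult.assoc)
  also have "\<dots> \<le> (\<Sum>i\<in>UNIV. \<Sum>j\<in>UNIV. norm (l$i) * norm (r$j) * norm (E$i$j))"
    unfolding norm_mult
    by (rule order_trans[OF norm_sum sum_mono[OF order_trans[OF norm_sum]]]) (simp add: norm_mult ac_simps)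
  also have "\<dots> \<le> (\<Sum>i\<in>UNIV. \<Sum>j\<in>UNIV. norm (l$i) * norm (r$j) * \<delta>)"
    by (intro sum_mono mult_left_mono assms) simp
  also have "\<dots> = (\<Sum>i\<in>UNIV. norm (l$i)) * (\<Sum>j\<in>UNIV. norm (r$j)) * \<delta>"
    by (simp add: sum_distrib_left sum_distrib_right) (rule sum.swap)
  finally show ?thesis .
qed

definition vcnj :: "complex^'n \<Rightarrow> complex^'n" where
  "vcnj v = (\<chi> i. cnj (v$i))"

lemma vcnj_nth [simp]: "vcnj v $ i = cnj (v $ i)"
  by (simp add: vcnj_def)

lemma vcnj_vcnj [simp]: "vcnj (vcnj v) = v"
  by (simp add: vec_eq_iff)

lemma vcnj_eq_0_iff [simp]: "vcnj v = 0 \<longleftrightarrow> v = 0"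
  by (auto simp: vec_eq_iff)

lemma vcnj_scale: "vcnj (c *s v) = cnj c *s vcnj v"
  by (simp add: vec_eq_iff)

lemma bounded_linear_vcnj: "bounded_linear vcnj"
  by (intro linear_conv_bounded_linear[THEN iffD1] linearI) (simp_all add: vec_eq_iff)

lemma cross3c_vcnj: "cross3c (vcnj a) (vcnj b) = vcnj (cross3c a b)"
  by (simp add: cross3c_def vec_eq_iff forall_3)

lemma cross3c_scale_right: "cross3c a (c *s b) = c *s cross3c a b"
  by (simp add: cross3c_def vec_eq_iff forall_3 algebra_simps)

lemma cross3c_commute: "cross3c a b = - cross3c b a"
  by (simp add: cross3c_def vec_eq_iff forall_3 algebra_simps)

lemma cross3c_eq_0_imp_proportional:
  assumes "a \<noteq> 0" "cross3c a b = 0"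
  obtains c where "b = c *s a"
proof -
  have e: "a$2 * b$3 = a$3 * b$2" "a$3 * b$1 = a$1 * b$3" "a$1 * b$2 = a$2 * b$1"
    using assms(2) by (simp_all add: cross3c_def vec_eq_iff forall_3)
  obtain i where "a$i \<noteq> 0" using assms(1) by (auto simp: vec_eq_iff)
  then have "b = (b$i / a$i) *s a"
    using e exhaust_3[of i] by (auto simp: vec_eq_iff forall_3 field_simps)
  then show ?thesis by (rule that)
qed

section \<open>Linear ordinary differential equations\<close>

lemma nonneg_gronwall_right:
  fixes g g' :: "real \<Rightarrow> real"
  assumes deriv: "\<And>s. (g has_real_derivative g' s) (at s)"
    and bound: "\<And>s. s \<in> {x0..x} \<Longrightarrow> g' s \<le> C * g s"
    and "x0 \<le> x" "g x0 = 0" "g x \<ge> 0"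
  shows "g x = 0"
proof -
  have weighted: "((\<lambda>s. exp (- C * s) * g s) has_real_derivative exp (- C * s) * (g' s - C * g s)) (at s)" for s
    by (auto intro!: derivative_eq_intros deriv simp: algebra_simps)
  have "exp (- C * x) * g x \<le> exp (- C * x0) * g x0"
    by (rule deriv_nonpos_imp_antimono[OF weighted _ \<open>x0 \<le> x\<close>])
       (use bound in \<open>simp add: mult_nonneg_nonpos\<close>)
  then show ?thesis using assms(4,5) by (simp add: mult_le_0_iff)
qed

lemma nonneg_gronwall:
  fixes g g' :: "real \<Rightarrow> real"
  assumes deriv: "\<And>s. (g has_real_derivative g' s) (at s)"
    and bound: "\<And>s. s \<in> closed_segment x0 x \<Longrightarrow> \<bar>g' s\<bar> \<le> C * g s"
    and "g x0 = 0" "\<And>s. g s \<ge> 0"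
  shows "g x = 0"
proof (cases "x0 \<le> x")
  case True
  show ?thesis
  proof (rule nonneg_gronwall_right[OF deriv _ True])
    show "g' s \<le> C * g s" if "s \<in> {x0..x}" for s
      using bound[of s] that True by (auto simp: closed_segment_eq_real_ivl)
  qed (use assms in auto)
next
  case False
  have "g (- (- x)) = 0"
  proof (rule nonneg_gronwall_right[where g = "\<lambda>s. g (- s)" and g' = "\<lambda>s. - g' (- s)"])
    show "((\<lambda>s. g (- s)) has_real_derivative - g' (- s)) (at s)" for s
      using DERIV_mirror deriv by blast
    show "- g' (- s) \<le> C * g (- s)" if "s \<in> {- x0..- x}" for s
      using bound[of "- s"] that False by (auto simp: closed_segment_eq_real_ivl)
  qed (use assms False in auto)
  then show ?thesis by simp
qed

lemma linear_ode_eq_0: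
  fixes f :: "real \<Rightarrow> complex^'n" and A :: "real \<Rightarrow> complex^'n^'n"
  assumes deriv: "\<And>x. (f has_vector_derivative (A x *v f x)) (at x)"
    and cont: "\<And>i j. continuous_on UNIV (\<lambda>x. A x $ i $ j)"
    and "f x0 = 0"
  shows "f x = 0"
proof -
  define K where "K x = (\<Sum>i\<in>UNIV. \<Sum>j\<in>UNIV. norm (A x $ i $ j))" for x
  have "continuous_on UNIV K"
    unfolding K_def by (intro continuous_on_sum continuous_on_norm cont)
  then have "bounded (K ` closed_segment x0 x)"
    by (meson compact_imp_bounded compact_continuous_image compact_segment continuous_on_subset top_greatest)
  then obtain Kmax where Kmax: "\<And>s. s \<in> closed_segment x0 x \<Longrightarrow> K s \<le> Kmax"
    unfolding bounded_real by (meson abs_le_D1 imageI)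
  define g where "g s = f s \<bullet> f s" for s
  have g_deriv: "(g has_real_derivative 2 * (f s \<bullet> (A s *v f s))) (at s)" for s
    using has_derivative_inner[OF deriv[unfolded has_vector_derivative_def] deriv[unfolded has_vector_derivative_def]]
    unfolding g_def by (rule has_derivative_imp_has_field_derivative) (simp add: inner_commute)
  have "\<bar>2 * (f s \<bullet> (A s *v f s))\<bar> \<le> (2 * Kmax) * g s" if "s \<in> closed_segment x0 x" for s
  proof -
    have "\<bar>f s \<bullet> (A s *v f s)\<bar> \<le> norm (f s) * (K s * norm (f s))"
      unfolding K_def
      by (rule order_trans[OF Cauchy_Schwarz_ineq2 mult_left_mono[OF norm_matrix_vector_mult_le]]) simp
    also have "\<dots> \<le> norm (f s) * (Kmax * norm (f s))"
      using Kmax[OF that] by (intro mult_left_mono mult_right_mono) auto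
    finally show ?thesis by (simp add: g_def dot_square_norm power2_eq_square algebra_simps)
  qed
  moreover have "g x0 = 0" "\<And>s. g s \<ge> 0"
    by (simp_all add: g_def \<open>f x0 = 0\<close>)
  ultimately have "g x = 0"
    by (rule nonneg_gronwall[OF g_deriv])
  then show ?thesis by (simp add: g_def)
qed

lemma linear_ode_nowhere_0:
  fixes f :: "real \<Rightarrow> complex^'n" and A :: "real \<Rightarrow> complex^'n^'n"
  assumes "\<And>x. (f has_vector_derivative (A x *v f x)) (at x)"
    and "\<And>i j. continuous_on UNIV (\<lambda>x. A x $ i $ j)"
    and "f x0 \<noteq> 0"
  shows "f x \<noteq> 0"
  using linear_ode_eq_0[OF assms(1,2), of x x0] assms(3) by blast

lemma linear_ode_proportional:
  fixes p m :: "real \<Rightarrow> complex^'n" and A :: "real \<Rightarrow> complex^'n^'n"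
  assumes p: "\<And>x. (p has_vector_derivative (A x *v p x)) (at x)"
    and m: "\<And>x. (m has_vector_derivative (A x *v m x)) (at x)"
    and A_cont: "\<And>i j. continuous_on UNIV (\<lambda>x. A x $ i $ j)"
    and "m x0 = c *s p x0"
  shows "m x = c *s p x"
proof -
  have "((\<lambda>y. m y - c *s p y) has_vector_derivative A y *v (m y - c *s p y)) (at y)" for y
    using has_vector_derivative_diff[OF m bounded_linear.has_vector_derivative[OF bounded_linear_vector_scalar_mult p]]
    by (simp add: matrix_vector_mult_diff_distrib vector_scalar_commute)
  from linear_ode_eq_0[OF this A_cont, of x0 x] show ?thesis
    using \<open>m x0 = c *s p x0\<close> by simp
qed

lemma has_vector_derivative_divide_eq_0:
  fixes m p :: "real \<Rightarrow> complex"
  assumes m: "(m has_vector_derivative m') (at t)" and p: "(p has_vector_derivative p') (at t)"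
    and "p t \<noteq> 0" and "m' * p t = m t * p'"
  shows "((\<lambda>s. m s / p s) has_vector_derivative 0) (at t)"
proof -
  have "((\<lambda>s. inverse (p s)) has_vector_derivative p' * - (inverse (p t) * inverse (p t))) (at t)"
    using field_vector_diff_chain_at[OF p DERIV_inverse[OF \<open>p t \<noteq> 0\<close>]] by (simp add: o_def power2_eq_square)
  from has_vector_derivative_mult[OF m this]
  have "((\<lambda>s. m s / p s) has_vector_derivative
      m t * (p' * - (inverse (p t) * inverse (p t))) + m' * inverse (p t)) (at t)"
    by (simp add: divide_inverse)
  moreover have "m t * (p' * - (inverse (p t) * inverse (p t))) + m' * inverse (p t) = 0"
    using assms(3,4) by (simp add: field_simps power2_eq_square)
  ultimately show ?thesis by (simp only:)
qed

lemma proportionality_factor_constant: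
  fixes p m :: "real \<Rightarrow> complex^'n" and T :: "real \<Rightarrow> complex^'n^'n" and C :: "real \<Rightarrow> complex"
  assumes p: "\<And>t. (p has_vector_derivative (T t *v p t)) (at t)"
    and m: "\<And>t. (m has_vector_derivative (T t *v m t)) (at t)"
    and C: "\<And>t. m t = C t *s p t" and p_nonzero: "\<And>t. p t \<noteq> 0"
  obtains c where "\<And>t. C t = c"
proof -
  have "(C has_vector_derivative 0) (at t0)" for t0
  proof -
    obtain j where j: "p t0 $ j \<noteq> 0" using p_nonzero[of t0] by (auto simp: vec_eq_iff)
    have p_j: "((\<lambda>s. p s $ j) has_vector_derivative (T s *v p s) $ j) (at s)" for s
      using bounded_linear.has_vector_derivative[OF bounded_linear_vec_nth p] .
    have m_j: "((\<lambda>s. m s $ j) has_vector_derivative (T s *v m s) $ j) (at s)" for s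
      using bounded_linear.has_vector_derivative[OF bounded_linear_vec_nth m] .
    have "continuous_on UNIV (\<lambda>s. p s $ j)"
      using p_j by (intro continuous_on_vector_derivative) blast
    then have "open {s. p s $ j \<noteq> 0}"
      by (rule open_Collect_neq[OF _ continuous_on_const])
    have "(T t0 *v m t0) $ j * p t0 $ j = m t0 $ j * (T t0 *v p t0) $ j"
      unfolding C[of t0] by (simp add: vector_scalar_commute)
    then have "((\<lambda>s. m s $ j / p s $ j) has_vector_derivative 0) (at t0)"
      by (rule has_vector_derivative_divide_eq_0[OF m_j p_j j])
    then show ?thesis
    proof (rule has_vector_derivative_transform_within_open)
      show "m s $ j / p s $ j = C s" if "s \<in> {s. p s $ j \<noteq> 0}" for s
        using that C[of s] by simp
    qed (use j \<open>open {s. p s $ j \<noteq> 0}\<close> in auto)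
  qed
  then show ?thesis
    using has_derivative_zero_constant[of UNIV C] that by (auto simp: has_vector_derivative_def)
qed

lemma pointwise_proportional_solutions_proportional:
  fixes P M :: "real \<Rightarrow> real \<Rightarrow> complex^'n" and A T :: "real \<Rightarrow> real \<Rightarrow> complex^'n^'n"
  assumes P_x: "\<And>x t. ((\<lambda>y. P y t) has_vector_derivative A x t *v P x t) (at x)"
    and M_x: "\<And>x t. ((\<lambda>y. M y t) has_vector_derivative A x t *v M x t) (at x)"
    and P_t: "\<And>x t. ((\<lambda>s. P x s) has_vector_derivative T x t *v P x t) (at t)"
    and M_t: "\<And>x t. ((\<lambda>s. M x s) has_vector_derivative T x t *v M x t) (at t)"
    and A_cont: "\<And>t i j. continuous_on UNIV (\<lambda>x. A x t $ i $ j)"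
    and P_nonzero: "\<And>t. \<exists>x. P x t \<noteq> 0"
    and proportional: "\<And>x t. \<exists>c. M x t = c *s P x t"
  obtains c where "\<And>x t. M x t = c *s P x t"
proof -
  have "\<exists>c. \<forall>x. M x t = c *s P x t" for t
    using proportional[of 0 t] linear_ode_proportional[OF P_x M_x A_cont] by blast
  then obtain C where C: "\<And>x t. M x t = C t *s P x t"
    by metis
  moreover have "P 0 t \<noteq> 0" for t
    using P_nonzero[of t] linear_ode_nowhere_0[OF P_x A_cont] by blast
  ultimately obtain c where "\<And>t. C t = c"
    using proportionality_factor_constant[OF P_t M_t] by metis
  then have "M x t = c *s P x t" for x t
    using C by simp
  then show ?thesis by (rule that)
qed

section \<open>Solutions vanishing at infinity\<close>

lemma nonneg_integrable_tail_le:
  fixes P :: "real \<Rightarrow> real"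
  assumes nonneg: "\<And>x. 0 \<le> P x" and cont: "continuous_on UNIV P" and int: "P integrable_on {a..}"
    and "e > 0"
  obtains b where "\<And>x y. b \<le> x \<Longrightarrow> x \<le> y \<Longrightarrow> integral {x..y} P \<le> e"
proof -
  have abs_int: "P absolutely_integrable_on {a..}"
    using int nonneg by (rule nonnegative_absolutely_integrable_1)
  have "((\<lambda>b. set_lebesgue_integral lebesgue {a..b} P) \<longlongrightarrow> set_lebesgue_integral lebesgue {a..} P) at_top"
    by (rule tendsto_set_lebesgue_integral_at_top) (auto simp: abs_int)
  moreover have "set_lebesgue_integral lebesgue {a..b} P = integral {a..b} P" for b
    by (rule set_lebesgue_integral_eq_integral(2)[OF set_integrable_subset[OF abs_int]]) auto
  ultimately have "((\<lambda>b. integral {a..b} P) \<longlongrightarrow> set_lebesgue_integral lebesgue {a..} P) at_top"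
    by simp
  then have "\<forall>\<^sub>F b in at_top. \<bar>integral {a..b} P - set_lebesgue_integral lebesgue {a..} P\<bar> < e / 2"
    unfolding tendsto_iff dist_real_def using \<open>e > 0\<close> by (meson half_gt_zero)
  then obtain b0 where b0: "\<And>b. b \<ge> b0 \<Longrightarrow> \<bar>integral {a..b} P - set_lebesgue_integral lebesgue {a..} P\<bar> < e / 2"
    by (auto simp: eventually_at_top_linorder)
  show ?thesis
  proof (rule that[of "max a b0"])
    fix x y assume xy: "max a b0 \<le> x" "x \<le> y"
    have "P integrable_on {a..y}"
      by (intro integrable_continuous_interval continuous_on_subset[OF cont]) auto
    then have "integral {a..x} P + integral {x..y} P = integral {a..y} P"
      using xy by (intro Henstock_Kurzweil_Integration.integral_combine) auto
    then show "integral {x..y} P \<le> e"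
      using xy b0[of x] b0[of y] by linarith
  qed
qed

lemma nondecaying_mode_backward_estimate:
  fixes w q :: "real \<Rightarrow> complex"
  assumes deriv: "\<And>s. (w has_vector_derivative (d * w s + q s)) (at s)"
    and "Re d \<ge> 0" and "x \<le> y"
    and q_bound: "\<And>s. s \<in> {x..y} \<Longrightarrow> norm (q s) \<le> Q s" and "Q integrable_on {x..y}"
  shows "norm (w x) \<le> norm (w y) + integral {x..y} Q"
proof -
  define g where "g s = exp (d * of_real (x - s)) * w s" for s
  define h where "h s = exp (d * of_real (x - s)) * q s" for s
  have weight_le_1: "norm (exp (d * of_real (x - s))) \<le> 1" if "s \<ge> x" for s
    using \<open>Re d \<ge> 0\<close> that by (simp add: mult_nonneg_nonpos)
  have weight_deriv: "((\<lambda>s. exp (d * of_real (x - s))) has_vector_derivative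
      - d * exp (d * of_real (x - s))) (at s)" for s
  proof -
    have "((\<lambda>z. exp (d * (of_real x - z))) has_field_derivative
        - d * exp (d * (of_real x - of_real s))) (at (of_real s))"
      by (auto intro!: derivative_eq_intros simp: algebra_simps)
    from has_vector_derivative_real_field[OF this] show ?thesis by simp
  qed
  have "(g has_vector_derivative h s) (at s)" for s
    using has_vector_derivative_mult[OF weight_deriv deriv] unfolding g_def[abs_def] h_def
    by (simp add: algebra_simps)
  then have "(h has_integral (g y - g x)) {x..y}"
    by (intro fundamental_theorem_of_calculus[OF \<open>x \<le> y\<close>]) (auto intro: has_vector_derivative_at_within)
  then have "w x = g y - integral {x..y} h" and h_int: "h integrable_on {x..y}"
    by (auto simp: g_def integral_unique)
  then have "norm (w x) \<le> norm (g y) + norm (integral {x..y} h)"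
    by (metis norm_triangle_ineq4)
  also have "norm (g y) \<le> norm (w y)"
    unfolding g_def norm_mult using weight_le_1[OF \<open>x \<le> y\<close>] by (simp add: mult_left_le_one_le)
  also have "norm (integral {x..y} h) \<le> integral {x..y} Q"
  proof (rule integral_norm_bound_integral[OF h_int \<open>Q integrable_on {x..y}\<close>])
    fix s assume "s \<in> {x..y}"
    then show "norm (h s) \<le> Q s"
      unfolding h_def norm_mult using weight_le_1[of s] q_bound[of s]
      by (auto intro: order_trans[OF mult_left_le_one_le])
  qed
  finally show ?thesis by simp
qed

lemma nondecaying_mode_tendsto_0_bound:
  fixes w q :: "real \<Rightarrow> complex"
  assumes deriv: "\<And>s. (w has_vector_derivative (d * w s + q s)) (at s)" and "Re d \<ge> 0"
    and lim: "(w \<longlongrightarrow> 0) at_top"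
    and q_bound: "\<And>s. s \<ge> x \<Longrightarrow> norm (q s) \<le> Q s" and Q_int: "\<And>y. Q integrable_on {x..y}"
    and Q_tail: "\<And>y. x \<le> y \<Longrightarrow> integral {x..y} Q \<le> E"
  shows "norm (w x) \<le> E"
proof -
  have "norm (w x) \<le> norm (w y) + E" if "x \<le> y" for y
    using nondecaying_mode_backward_estimate[OF deriv \<open>Re d \<ge> 0\<close> that _ Q_int] q_bound Q_tail[OF that]
    by fastforce
  then have "\<forall>\<^sub>F y in at_top. norm (w x) \<le> norm (w y) + E"
    by (auto simp: eventually_at_top_linorder)
  moreover have "((\<lambda>y. norm (w y) + E) \<longlongrightarrow> 0 + E) at_top"
    by (intro tendsto_add tendsto_norm_zero lim tendsto_const)
  ultimately show ?thesis
    by (simp add: tendsto_lowerbound)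
qed

lemma continuous_convergent_at_top_bdd_above:
  fixes W :: "real \<Rightarrow> real"
  assumes cont: "continuous_on UNIV W" and lim: "(W \<longlongrightarrow> L) at_top"
  shows "bdd_above (W ` {b..})"
proof -
  have "\<forall>\<^sub>F x in at_top. W x < L + 1"
    using lim by (simp add: order_tendstoD(2))
  then obtain c where c: "\<And>x. x \<ge> c \<Longrightarrow> W x \<le> L + 1"
    unfolding eventually_at_top_linorder by (meson less_imp_le)
  have "bounded (W ` {b..c})"
    by (meson cont compact_Icc compact_continuous_image compact_imp_bounded continuous_on_subset top_greatest)
  then obtain B where "\<And>x. x \<in> {b..c} \<Longrightarrow> W x \<le> B"
    unfolding bounded_real by (meson abs_le_D1 imageI)
  then have "W x \<le> max B (L + 1)" if "x \<ge> b" for x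
    using c[of x] that by (cases "x \<le> c") (auto simp: le_max_iff_disj)
  then show ?thesis
    by (auto simp: bdd_above_def)
qed

lemma nondecaying_perturbed_system_vanishes_on_tail:
  fixes w q :: "'i::finite \<Rightarrow> real \<Rightarrow> complex" and d :: "'i \<Rightarrow> complex" and P :: "real \<Rightarrow> real"
  assumes deriv: "\<And>j x. (w j has_vector_derivative (d j * w j x + q j x)) (at x)"
    and Re_d: "\<And>j. Re (d j) \<ge> 0"
    and q_bound: "\<And>j x. norm (q j x) \<le> P x * (\<Sum>i\<in>UNIV. norm (w i x))"
    and P_nonneg: "\<And>x. 0 \<le> P x" and P_cont: "continuous_on UNIV P"
    and P_tail: "\<And>x y. b \<le> x \<Longrightarrow> x \<le> y \<Longrightarrow> integral {x..y} P \<le> 1 / (2 * real CARD('i))"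
    and lim: "\<And>j. (w j \<longlongrightarrow> 0) at_top"
    and "b \<le> x"
  shows "w j x = 0"
proof -
  define W where "W x = (\<Sum>i\<in>UNIV. norm (w i x))" for x
  have "continuous_on UNIV (w j)" for j
    using deriv by (intro continuous_on_vector_derivative) blast
  then have "continuous_on UNIV W"
    unfolding W_def by (intro continuous_on_sum continuous_on_norm)
  moreover have "(W \<longlongrightarrow> (\<Sum>i\<in>(UNIV::'i set). 0)) at_top"
    unfolding W_def by (intro tendsto_sum tendsto_norm_zero lim)
  ultimately have bdd: "bdd_above (W ` {b..})"
    by (rule continuous_convergent_at_top_bdd_above)
  define N where "N = Sup (W ` {b..})"
  have W_le_N: "W x \<le> N" if "x \<ge> b" for x
    unfolding N_def using bdd that by (auto intro: cSup_upper)
  have "N \<ge> 0"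
    using W_le_N[of b] sum_nonneg[of UNIV "\<lambda>i. norm (w i b)"] by (simp add: W_def)
  have w_le: "norm (w j x) \<le> N / (2 * real CARD('i))" if "x \<ge> b" for x j
  proof (rule nondecaying_mode_tendsto_0_bound[OF deriv Re_d lim])
    show "norm (q j s) \<le> N * P s" if "s \<ge> x" for s
      using q_bound[of j s] W_le_N[of s] P_nonneg[of s] \<open>x \<ge> b\<close> that
      by (simp add: W_def) (metis mult.commute mult_left_mono order_trans)
    show "(\<lambda>s. N * P s) integrable_on {x..y}" for y
      by (intro integrable_continuous_interval continuous_intros continuous_on_subset[OF P_cont]) auto
    show "integral {x..y} (\<lambda>s. N * P s) \<le> N / (2 * real CARD('i))" if "x \<le> y" for y
      using mult_left_mono[OF P_tail[OF \<open>x \<ge> b\<close> that] \<open>N \<ge> 0\<close>] by simp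
  qed
  have "W x \<le> N / 2" if "x \<ge> b" for x
  proof -
    have "W x \<le> (\<Sum>i\<in>(UNIV::'i set). N / (2 * real CARD('i)))"
      unfolding W_def using w_le[OF that] by (intro sum_mono)
    then show ?thesis by simp
  qed
  then have "N \<le> N / 2"
    unfolding N_def by (intro cSup_least) (auto simp: N_def)
  then have "norm (w j x) \<le> 0"
    using w_le[OF \<open>b \<le> x\<close>, of j] \<open>N \<ge> 0\<close> by simp
  then show ?thesis by simp
qed

lemma expansion_perturbation_bound:
  fixes l r :: "'n \<Rightarrow> complex^'n" and n :: "'n \<Rightarrow> complex"
  assumes expansion: "\<And>v. v = (\<Sum>i\<in>UNIV. (pairing (l i) v / n i) *s r i)"
  obtains K where "K \<ge> 0"
    and "\<And>E \<delta> v j. (\<And>i k. norm (E$i$k) \<le> \<delta>) \<Longrightarrow>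
           norm (pairing (l j) (E *v v)) \<le> K * \<delta> * (\<Sum>i\<in>UNIV. norm (pairing (l i) v))"
proof
  define K where "K = (\<Sum>j\<in>UNIV. \<Sum>i\<in>UNIV. (\<Sum>k\<in>UNIV. norm (l j $ k)) * (\<Sum>k\<in>UNIV. norm (r i $ k)) / norm (n i))"
  show "K \<ge> 0"
    unfolding K_def by (intro sum_nonneg mult_nonneg_nonneg divide_nonneg_nonneg) auto
  have K_term_le: "(\<Sum>k\<in>UNIV. norm (l j $ k)) * (\<Sum>k\<in>UNIV. norm (r i $ k)) / norm (n i) \<le> K" for i j
    unfolding K_def
    by (intro member_le_sum[of j, THEN order_trans[rotated]] member_le_sum[of i])
       (auto intro!: sum_nonneg mult_nonneg_nonneg divide_nonneg_nonneg)
  fix E :: "complex^'n^'n" and \<delta> v j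
  assume E_le: "\<And>i k. norm (E$i$k) \<le> \<delta>"
  then have "\<delta> \<ge> 0" using norm_ge_zero order_trans by blast
  have "pairing (l j) (E *v v) = (\<Sum>i\<in>UNIV. pairing (l i) v / n i * pairing (l j) (E *v r i))"
    by (subst expansion[of v]) (simp add: pairing_matrix_vector_mult_sum)
  also have "norm \<dots> \<le> (\<Sum>i\<in>UNIV. norm (pairing (l i) v) * (K * \<delta>))"
  proof (rule order_trans[OF norm_sum sum_mono])
    fix i
    have "norm (pairing (l j) (E *v r i)) / norm (n i) \<le> K * \<delta>"
      using divide_right_mono[OF norm_pairing_matrix_vector_mult_le[OF E_le], of "norm (n i)" "l j" "r i"]
        mult_right_mono[OF K_term_le \<open>\<delta> \<ge> 0\<close>, of j i] by (simp add: mult.commute)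
    then have "norm (pairing (l i) v) * (norm (pairing (l j) (E *v r i)) / norm (n i))
        \<le> norm (pairing (l i) v) * (K * \<delta>)"
      by (rule mult_left_mono) simp
    then show "norm (pairing (l i) v / n i * pairing (l j) (E *v r i)) \<le> norm (pairing (l i) v) * (K * \<delta>)"
      by (simp add: norm_mult norm_divide)
  qed
  finally show "norm (pairing (l j) (E *v v)) \<le> K * \<delta> * (\<Sum>i\<in>UNIV. norm (pairing (l i) v))"
    by (simp add: sum_distrib_left mult.commute)
qed

lemma modal_component_has_vector_derivative:
  assumes deriv: "(f has_vector_derivative (B x *v f x)) (at x)"
    and \<theta>_deriv: "(\<theta> has_vector_derivative c) (at x)"
    and left_eigen: "\<And>v. pairing l (Blim *v v) = \<mu> * pairing l v"
  shows "((\<lambda>x. exp (\<i> * \<theta> x) * pairing l (f x)) has_vector_derivative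
      (\<mu> + \<i> * c) * (exp (\<i> * \<theta> x) * pairing l (f x)) + exp (\<i> * \<theta> x) * pairing l ((B x - Blim) *v f x))
      (at x)"
proof -
  have "((\<lambda>x. exp (\<i> * \<theta> x)) has_vector_derivative \<i> * c * exp (\<i> * \<theta> x)) (at x)"
    using field_vector_diff_chain_at[OF has_vector_derivative_mult_right[OF \<theta>_deriv] DERIV_exp]
    by (simp add: o_def)
  from has_vector_derivative_mult[OF this bounded_linear.has_vector_derivative[OF bounded_linear_pairing deriv]]
  have "((\<lambda>x. exp (\<i> * \<theta> x) * pairing l (f x)) has_vector_derivative
      \<i> * c * (exp (\<i> * \<theta> x) * pairing l (f x)) + exp (\<i> * \<theta> x) * pairing l (B x *v f x)) (at x)"
    by (simp add: algebra_simps)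
  moreover have "pairing l (B x *v f x) = \<mu> * pairing l (f x) + pairing l ((B x - Blim) *v f x)"
    using left_eigen by (simp add: matrix_vector_mult_diff_rdistrib pairing_diff)
  ultimately show ?thesis
    by (simp add: algebra_simps)
qed

lemma asymptotically_diagonal_ode_eq_0_at_top:
  fixes f :: "real \<Rightarrow> complex^'n" and B :: "real \<Rightarrow> complex^'n^'n" and Blim :: "complex^'n^'n"
    and l r :: "'n \<Rightarrow> complex^'n" and n \<mu> :: "'n \<Rightarrow> complex" and \<theta> :: "real \<Rightarrow> complex"
    and \<delta> :: "real \<Rightarrow> real"
  assumes deriv: "\<And>x. (f has_vector_derivative (B x *v f x)) (at x)"
    and B_cont: "\<And>i j. continuous_on UNIV (\<lambda>x. B x $ i $ j)"
    and left_eigen: "\<And>j v. pairing (l j) (Blim *v v) = \<mu> j * pairing (l j) v"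
    and expansion: "\<And>v. v = (\<Sum>i\<in>UNIV. (pairing (l i) v / n i) *s r i)"
    and B_close: "\<And>x i j. norm ((B x - Blim) $ i $ j) \<le> \<delta> x"
    and \<delta>_cont: "continuous_on UNIV \<delta>" and \<delta>_int: "\<delta> absolutely_integrable_on {a..}"
    and \<theta>_deriv: "\<And>x. (\<theta> has_vector_derivative c) (at x)"
    and Re_nonneg: "\<And>j. Re (\<mu> j + \<i> * c) \<ge> 0"
    and lim: "((\<lambda>x. exp (\<i> * \<theta> x) *s f x) \<longlongrightarrow> 0) at_top"
  shows "f x = 0"
proof -
  obtain K where "K \<ge> 0" and K: "\<And>E \<delta> v j. (\<And>i k. norm (E$i$k) \<le> \<delta>) \<Longrightarrow>
      norm (pairing (l j) (E *v v)) \<le> K * \<delta> * (\<Sum>i\<in>UNIV. norm (pairing (l i) v))"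
    using expansion_perturbation_bound[OF expansion] by blast
  define P where "P x = K * \<delta> x" for x
  define w where "w j x = exp (\<i> * \<theta> x) * pairing (l j) (f x)" for j x
  define q where "q j x = exp (\<i> * \<theta> x) * pairing (l j) ((B x - Blim) *v f x)" for j x
  have P_nonneg: "P x \<ge> 0" for x
    unfolding P_def using \<open>K \<ge> 0\<close> B_close[of x] norm_ge_zero order_trans by (blast intro: mult_nonneg_nonneg)
  have P_cont: "continuous_on UNIV P"
    unfolding P_def by (intro continuous_intros \<delta>_cont)
  have P_int: "P integrable_on {a..}"
    unfolding P_def using \<delta>_int integrable_cmul[of \<delta> "{a..}" K] by (simp add: absolutely_integrable_on_def)
  obtain b where b: "\<And>x y. b \<le> x \<Longrightarrow> x \<le> y \<Longrightarrow> integral {x..y} P \<le> 1 / (2 * real CARD('n))"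
    using nonneg_integrable_tail_le[OF P_nonneg P_cont P_int, of "1 / (2 * real CARD('n))"] by auto
  have w_deriv: "(w j has_vector_derivative ((\<mu> j + \<i> * c) * w j x + q j x)) (at x)" for j x
    using modal_component_has_vector_derivative[where B = B and x = x, OF deriv \<theta>_deriv left_eigen]
    unfolding w_def[abs_def] q_def by simp
  have q_bound: "norm (q j x) \<le> P x * (\<Sum>i\<in>UNIV. norm (w i x))" for j x
    using mult_left_mono[OF K[OF B_close[of x], where v = "f x" and j = j], of "norm (exp (\<i> * \<theta> x))"]
    by (simp add: q_def w_def P_def norm_mult sum_distrib_left mult_ac)
  have w_lim: "(w j \<longlongrightarrow> 0) at_top" for j
    using bounded_linear.tendsto[OF bounded_linear_pairing lim, of "l j"]
    by (simp add: w_def[abs_def] pairing_scale)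
  have "w j b = 0" for j
    using nondecaying_perturbed_system_vanishes_on_tail[OF w_deriv Re_nonneg q_bound P_nonneg P_cont b w_lim]
    by simp
  then have "f b = 0"
    by (subst expansion) (simp add: w_def)
  then show ?thesis
    by (rule linear_ode_eq_0[OF deriv B_cont])
qed

lemma asymptotically_diagonal_ode_eq_0_at_bot:
  fixes f :: "real \<Rightarrow> complex^'n" and B :: "real \<Rightarrow> complex^'n^'n" and Blim :: "complex^'n^'n"
    and l r :: "'n \<Rightarrow> complex^'n" and n \<mu> :: "'n \<Rightarrow> complex" and \<theta> :: "real \<Rightarrow> complex"
    and \<delta> :: "real \<Rightarrow> real"
  assumes deriv: "\<And>x. (f has_vector_derivative (B x *v f x)) (at x)"
    and B_cont: "\<And>i j. continuous_on UNIV (\<lambda>x. B x $ i $ j)"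
    and left_eigen: "\<And>j v. pairing (l j) (Blim *v v) = \<mu> j * pairing (l j) v"
    and expansion: "\<And>v. v = (\<Sum>i\<in>UNIV. (pairing (l i) v / n i) *s r i)"
    and B_close: "\<And>x i j. norm ((B x - Blim) $ i $ j) \<le> \<delta> x"
    and \<delta>_cont: "continuous_on UNIV \<delta>" and \<delta>_int: "\<delta> absolutely_integrable_on {..a}"
    and \<theta>_deriv: "\<And>x. (\<theta> has_vector_derivative c) (at x)"
    and Re_nonpos: "\<And>j. Re (\<mu> j + \<i> * c) \<le> 0"
    and lim: "((\<lambda>x. exp (\<i> * \<theta> x) *s f x) \<longlongrightarrow> 0) at_bot"
  shows "f x = 0"
proof -
  have reflect: "((\<lambda>x. - x) has_vector_derivative -1) (at x)" for x :: real
    by (auto intro!: derivative_eq_intros)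
  have "f (- (- x)) = 0"
  proof (rule asymptotically_diagonal_ode_eq_0_at_top
      [where f = "\<lambda>x. f (- x)" and x = "- x" and B = "\<lambda>x. - B (- x)" and Blim = "- Blim" and \<mu> = "\<lambda>j. - \<mu> j" and \<theta> = "\<lambda>x. \<theta> (- x)"
        and c = "- c" and \<delta> = "\<lambda>x. \<delta> (- x)" and a = "- a", OF _ _ _ expansion])
    show "((\<lambda>x. f (- x)) has_vector_derivative (- B (- x)) *v f (- x)) (at x)" for x
      using vector_diff_chain_at[OF reflect deriv[of "- x"]] by (simp add: o_def matrix_vector_mult_uminus)
    show "((\<lambda>x. \<theta> (- x)) has_vector_derivative - c) (at x)" for x
      using vector_diff_chain_at[OF reflect \<theta>_deriv[of "- x"]] by (simp add: o_def)
    show "continuous_on UNIV (\<lambda>x. (- B (- x)) $ i $ j)" for i j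
    proof -
      have "continuous_on UNIV (\<lambda>x. B (- x) $ i $ j)"
        by (rule continuous_on_compose2[OF B_cont]) (auto intro!: continuous_intros)
      then show ?thesis by (simp add: continuous_on_minus)
    qed
    show "continuous_on UNIV (\<lambda>x. \<delta> (- x))"
      by (auto intro!: continuous_intros continuous_on_compose2[OF \<delta>_cont])
    show "(\<lambda>x. \<delta> (- x)) absolutely_integrable_on {- a..}"
      using has_absolute_integral_reflect_real[of "{- a..}" "{..a}" \<delta>] \<delta>_int by auto
    show "pairing (l j) ((- Blim) *v v) = - \<mu> j * pairing (l j) v" for j v
      using left_eigen[of j v] by (simp add: matrix_vector_mult_uminus pairing_minus)
    show "norm ((- B (- x) - - Blim) $ i $ j) \<le> \<delta> (- x)" for x i j
      using B_close[of "- x" i j] by (simp add: norm_minus_commute)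
    show "Re (- \<mu> j + \<i> * - c) \<ge> 0" for j
      using Re_nonpos[of j] by simp
    show "((\<lambda>x. exp (\<i> * \<theta> (- x)) *s f (- x)) \<longlongrightarrow> 0) at_top"
      using lim by (simp add: filterlim_at_bot_mirror)
  qed
  then show ?thesis by simp
qed

section \<open>The spectral problem\<close>

lemma kk_cnj: "kk uo (cnj z) = cnj (kk uo z)"
  by (simp add: kk_def)

lemma ll_cnj: "ll uo (cnj z) = cnj (ll uo z)"
  by (simp add: ll_def)

lemma phase_cnj: "phase a1 a2 uo l x t (cnj z) = cnj (phase a1 a2 uo l x t z)"
  by (simp add: phase_def ph1_def ph2_def kk_cnj ll_cnj)

lemma phase_simps [simp]:
  "phase a1 a2 uo 1 x t z = ph1 a1 a2 uo x t z"
  "phase a1 a2 uo 2 x t z = ph2 a1 a2 uo x t z"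
  "phase a1 a2 uo 3 x t z = - ph1 a1 a2 uo x t z"
  by (simp_all add: phase_def)

lemma
  assumes "z \<noteq> 0" "uo \<noteq> 0"
  shows kk_reflect: "kk uo (- of_real (uo^2) / z) = kk uo z"
    and ll_reflect: "ll uo (- of_real (uo^2) / z) = - ll uo z"
  using assms by (simp_all add: kk_def ll_def field_simps)

lemma
  assumes "z \<noteq> 0" "uo \<noteq> 0"
  shows ph1_reflect: "ph1 a1 a2 uo x t (- of_real (uo^2) / z) = - ph1 a1 a2 uo x t z"
    and ph2_reflect: "ph2 a1 a2 uo x t (- of_real (uo^2) / z) = ph2 a1 a2 uo x t z"
    and Xmat_reflect: "Xmat uo v (- of_real (uo^2) / z) = Xmat uo v z"
  unfolding ph1_def ph2_def Xmat_def kk_reflect[OF assms] ll_reflect[OF assms] by simp_all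

lemma Xmat_entries:
  "Xmat uo v z $ 1 $ 1 = - \<i> * kk uo z" "Xmat uo v z $ 1 $ 2 = - cnj (v$1)" "Xmat uo v z $ 1 $ 3 = - cnj (v$2)"
  "Xmat uo v z $ 2 $ 1 = v$1" "Xmat uo v z $ 2 $ 2 = \<i> * kk uo z" "Xmat uo v z $ 2 $ 3 = 0"
  "Xmat uo v z $ 3 $ 1 = v$2" "Xmat uo v z $ 3 $ 2 = 0" "Xmat uo v z $ 3 $ 3 = \<i> * kk uo z"
  by (simp_all add: Xmat_def msc_def sigma3_def Umat_def)

lemma vcnj_Xmat_cnj: "vcnj (Xmat uo v (cnj z) *v p) = - transpose (Xmat uo v z) *v vcnj p"
  by (simp add: vec_eq_iff forall_3 matrix_vector_mult_def sum_3 transpose_def Xmat_entries kk_cnj)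

lemma continuous_on_Xmat_entry:
  assumes "continuous_on UNIV v"
  shows "continuous_on UNIV (\<lambda>x. Xmat uo (v x) z $ i $ j)"
  using exhaust_3[of i] exhaust_3[of j]
  by (elim disjE; simp add: Xmat_entries; intro continuous_intros assms)

lemma lax_sol_cross3c_eq_0_iff_proportional:
  assumes P: "lax_sol a1 a2 uo u ux uxx z P" and M: "lax_sol a1 a2 uo u ux uxx z M"
    and u_cont: "\<And>t. continuous_on UNIV (\<lambda>x. u x t)"
    and P_nonzero: "\<And>t. \<exists>x. P x t \<noteq> 0" and M_nonzero: "\<exists>x t. M x t \<noteq> 0"
  shows "(\<forall>x t. cross3c (P x t) (M x t) = 0) \<longleftrightarrow> (\<exists>c. c \<noteq> 0 \<and> (\<forall>x t. M x t = c *s P x t))"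
proof
  assume cross: "\<forall>x t. cross3c (P x t) (M x t) = 0"
  have P_x: "((\<lambda>y. P y t) has_vector_derivative Xmat uo (u x t) z *v P x t) (at x)"
    and M_x: "((\<lambda>y. M y t) has_vector_derivative Xmat uo (u x t) z *v M x t) (at x)"
    and P_t: "((\<lambda>s. P x s) has_vector_derivative Tmat a1 a2 uo (u x t) (ux x t) (uxx x t) z *v P x t) (at t)"
    and M_t: "((\<lambda>s. M x s) has_vector_derivative Tmat a1 a2 uo (u x t) (ux x t) (uxx x t) z *v M x t) (at t)"
    for x t using P M unfolding lax_sol_def by blast+
  have X_cont: "continuous_on UNIV (\<lambda>x. Xmat uo (u x t) z $ i $ j)" for t i j
    by (rule continuous_on_Xmat_entry[OF u_cont])
  have "P x t \<noteq> 0" for x t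
    using P_nonzero[of t] linear_ode_nowhere_0[OF P_x X_cont] by blast
  then have "\<exists>c. M x t = c *s P x t" for x t
    using cross cross3c_eq_0_imp_proportional by metis
  then obtain c where c: "\<And>x t. M x t = c *s P x t"
    using pointwise_proportional_solutions_proportional[OF P_x M_x P_t M_t X_cont P_nonzero] by blast
  moreover have "c \<noteq> 0"
    using M_nonzero by (auto simp: c vec_eq_iff)
  ultimately show "\<exists>c. c \<noteq> 0 \<and> (\<forall>x t. M x t = c *s P x t)" by blast
next
  assume "\<exists>c. c \<noteq> 0 \<and> (\<forall>x t. M x t = c *s P x t)"
  then show "\<forall>x t. cross3c (P x t) (M x t) = 0"
    by (auto simp: cross3c_def vec_eq_iff forall_3 algebra_simps)
qed

lemma Xi1_nonzero:
  assumes "z \<in> Xi1 uo" "uo > 0"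
  shows "z \<noteq> 0" and "z^2 + of_real (uo^2) \<noteq> 0"
proof -
  have "cmod z > uo" using assms(1) by (simp add: Xi1_def)
  then show "z \<noteq> 0" using assms(2) by auto
  show "z^2 + of_real (uo^2) \<noteq> 0"
  proof
    assume "z^2 + of_real (uo^2) = 0"
    then have "z^2 = - of_real (uo^2)" by (simp add: add_eq_0_iff)
    then have "cmod (z^2) = uo^2" using assms(2) by (simp add: norm_power)
    then have "cmod z ^ 2 = uo ^ 2" by (simp add: norm_power)
    then show False
      using \<open>cmod z > uo\<close> assms(2) by (simp add: power2_eq_iff_nonneg)
  qed
qed

lemma Xi1_reflect:
  assumes "z \<in> Xi1 uo" "uo > 0"
  shows "- of_real (uo^2) / z \<in> Xi4 uo" and "cnj (- of_real (uo^2) / z) \<in> Xi3 uo"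
proof -
  define w where "w = - of_real (uo^2) / z"
  have "Im z > 0" "cmod z > uo" using assms(1) by (auto simp: Xi1_def)
  have "cmod w = uo^2 / cmod z"
    using assms(2) by (simp add: w_def norm_divide norm_power)
  also have "\<dots> < uo"
    using \<open>cmod z > uo\<close> assms(2) by (simp add: power2_eq_square divide_less_eq)
  finally have "cmod w < uo" .
  moreover have "Im w = uo^2 * Im z / (cmod z)^2"
    by (simp add: w_def Im_divide')
  moreover have "uo^2 * Im z / (cmod z)^2 > 0"
    using \<open>Im z > 0\<close> \<open>cmod z > uo\<close> assms(2) by (intro divide_pos_pos mult_pos_pos) auto
  ultimately have "w \<in> Xi4 uo" "cnj w \<in> Xi3 uo"
    by (simp_all add: Xi4_def Xi3_def)
  then show "- of_real (uo^2) / z \<in> Xi4 uo" and "cnj (- of_real (uo^2) / z) \<in> Xi3 uo"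
    by (simp_all only: w_def)
qed

lemma Im_ll_nonneg:
  assumes "Im z \<ge> 0" "cmod z \<ge> uo" "uo > 0"
  shows "Im (ll uo z) \<ge> 0"
proof -
  have z0: "cmod z > 0" using assms(2,3) by linarith
  have "Im (ll uo z) = (Im z - uo^2 * Im z / (cmod z)^2) / 2"
    by (simp add: ll_def Im_divide')
  also have "\<dots> = Im z * ((cmod z)^2 - uo^2) / (2 * (cmod z)^2)"
    using z0 by (simp add: field_simps)
  also have "\<dots> \<ge> 0"
  proof -
    have "uo^2 \<le> (cmod z)^2" using assms by (intro power_mono) auto
    then show ?thesis using assms by (intro divide_nonneg_pos mult_nonneg_nonneg) (auto simp: z0)
  qed
  finally show ?thesis .
qed

lemma kk_plus_ll: "kk uo z + ll uo z = z"
  by (simp add: kk_def ll_def field_simps)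

lemma ll_minus_kk: "ll uo z - kk uo z = of_real (uo^2) / z"
  by (simp add: kk_def ll_def field_simps)

lemma Im_kk_plus_Im_ll: "Im (kk uo z) + Im (ll uo z) = Im z"
  using arg_cong[OF kk_plus_ll, of Im] by simp

section \<open>The adjoint problem at a point of Xi1\<close>

(* adj_eigval z j is the x-derivative of -i h_j (with h_3 = -h_1), so the j-th mode is the one
   selected by the normalisation of the j-th column. *)
definition adj_eigval :: "real \<Rightarrow> complex \<Rightarrow> 3 \<Rightarrow> complex" where
  "adj_eigval uo z j = (if j = 1 then \<i> * ll uo z else if j = 2 then - \<i> * kk uo z else - \<i> * ll uo z)"

definition adj_left_eigvec :: "real \<Rightarrow> complex^2 \<Rightarrow> complex \<Rightarrow> 3 \<Rightarrow> complex^3" where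
  "adj_left_eigvec uo v z j =
     (if j = 1 then vector [z, \<i> * v$1, \<i> * v$2]
      else if j = 2 then vector [0, cnj (v$2), - cnj (v$1)]
      else vector [of_real (uo^2), - \<i> * z * v$1, - \<i> * z * v$2])"

definition adj_right_eigvec :: "real \<Rightarrow> complex^2 \<Rightarrow> complex \<Rightarrow> 3 \<Rightarrow> complex^3" where
  "adj_right_eigvec uo v z j =
     (if j = 1 then vector [z, - \<i> * cnj (v$1), - \<i> * cnj (v$2)]
      else if j = 2 then vector [0, v$2, - v$1]
      else vector [of_real (uo^2), \<i> * z * cnj (v$1), \<i> * z * cnj (v$2)])"

definition adj_eigvec_pairing :: "real \<Rightarrow> complex \<Rightarrow> 3 \<Rightarrow> complex" where
  "adj_eigvec_pairing uo z j =
     (if j = 1 then z^2 + of_real (uo^2) else if j = 2 then of_real (uo^2)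
      else of_real (uo^2) * (z^2 + of_real (uo^2)))"

lemma cnj_mult_self_sum_eq_norm:
  assumes "norm (v::complex^2) = uo"
  shows "cnj (v$1) * v$1 + cnj (v$2) * v$2 = of_real (uo^2)"
proof -
  have "uo^2 = (norm v)^2" using assms by simp
  also have "\<dots> = (cmod (v$1))^2 + (cmod (v$2))^2"
    unfolding norm_vec_def L2_set_def by (simp add: sum_2)
  finally have "uo^2 = (cmod (v$1))^2 + (cmod (v$2))^2" .
  moreover have "cnj (v$i) * v$i = of_real ((cmod (v$i))^2)" for i
    by (simp only: complex_norm_square mult.commute)
  ultimately show ?thesis
    by (simp only: of_real_add)
qed

lemma adj_left_eigvec_eigen:
  assumes "norm v = uo" "z \<noteq> 0" "uo \<noteq> 0"
  shows "pairing (adj_left_eigvec uo v z j) ((- transpose (Xmat uo v z)) *v p)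
       = adj_eigval uo z j * pairing (adj_left_eigvec uo v z j) p"
proof -
  have v: "cnj (v$1) * v$1 + cnj (v$2) * v$2 = of_real uo * of_real uo"
    using cnj_mult_self_sum_eq_norm[OF assms(1)] by (simp add: power2_eq_square)
  consider "j = 1" | "j = 2" | "j = 3" using exhaust_3 by blast
  then show ?thesis
  proof cases
    case 1 show ?thesis unfolding 1
      apply (simp add: adj_left_eigvec_def adj_eigval_def pairing_def sum_3 matrix_vector_mult_def
          transpose_def Xmat_entries kk_def ll_def)
      apply (simp add: field_simps assms(2,3))
      apply (use v in algebra)
      done
  next
    case 2 show ?thesis unfolding 2
      by (simp add: adj_left_eigvec_def adj_eigval_def pairing_def sum_3 matrix_vector_mult_def
          transpose_def Xmat_entries kk_def ll_def field_simps assms(2,3))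
  next
    case 3 show ?thesis unfolding 3
      apply (simp add: adj_left_eigvec_def adj_eigval_def pairing_def sum_3 matrix_vector_mult_def
          transpose_def Xmat_entries kk_def ll_def)
      apply (simp add: field_simps assms(2,3))
      apply (use v in algebra)
      done
  qed
qed

lemma adj_eigvec_expansion:
  assumes "norm v = uo" "uo \<noteq> 0" "z^2 + of_real (uo^2) \<noteq> 0"
  shows "p = (\<Sum>i\<in>UNIV. (pairing (adj_left_eigvec uo v z i) p / adj_eigvec_pairing uo z i)
                          *s adj_right_eigvec uo v z i)"
proof -
  have v: "cnj (v$1) * v$1 + cnj (v$2) * v$2 = of_real uo * of_real uo"
    using cnj_mult_self_sum_eq_norm[OF assms(1)] by (simp add: power2_eq_square)
  have z: "inverse (z^2 + (of_real uo)^2) * (z^2 + (of_real uo)^2) = 1"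
    using assms(3) by simp
  have uo: "inverse ((of_real uo)^2) * (of_real uo)^2 = (1::complex)"
    using assms(2) by simp
  have i: "\<i> * \<i> = (-1::complex)" by simp
  show ?thesis
    unfolding vec_eq_iff forall_3
    by (simp add: sum_3 adj_left_eigvec_def adj_right_eigvec_def adj_eigvec_pairing_def pairing_def
        divide_inverse inverse_mult_distrib, intro conjI; use v z uo i in algebra)
qed

lemma Re_adj_eigval_minus_ll_nonneg:
  assumes "z \<in> Xi1 uo" "uo > 0"
  shows "Re (adj_eigval uo z j + \<i> * (- ll uo z)) \<ge> 0"
proof -
  have "Im z > 0" "cmod z > uo" using assms(1) by (auto simp: Xi1_def)
  then have "Im (ll uo z) \<ge> 0" using Im_ll_nonneg assms(2) by simp
  then show ?thesis
    using \<open>Im z > 0\<close> Im_kk_plus_Im_ll[of uo z] exhaust_3[of j] by (auto simp: adj_eigval_def)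
qed

lemma Re_adj_eigval_plus_kk_nonpos:
  assumes "z \<in> Xi1 uo"
  shows "Re (adj_eigval uo z j + \<i> * kk uo z) \<le> 0"
proof -
  have "Im z > 0" using assms by (simp add: Xi1_def)
  moreover have "Im (ll uo z) - Im (kk uo z) = Im (of_real (uo^2) / z)"
    using arg_cong[OF ll_minus_kk, of Im] by simp
  moreover have "Im (of_real (uo^2) / z) \<le> 0"
    using \<open>Im z > 0\<close> by (simp add: Im_divide' divide_nonpos_nonneg)
  ultimately show ?thesis
    using Im_kk_plus_Im_ll[of uo z] exhaust_3[of j] by (auto simp: adj_eigval_def simp del: Im_divide)
qed

lemma adj_Xmat_diff_le:
  "norm ((- transpose (Xmat uo v z) - - transpose (Xmat uo w z)) $ i $ j) \<le> norm (v - w)"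
proof -
  have "norm (v$k - w$k) \<le> norm (v - w)" "norm (w$k - v$k) \<le> norm (v - w)" for k
    using Finite_Cartesian_Product.norm_nth_le[of "v - w" k] by (simp_all add: norm_minus_commute)
  moreover have "norm (cnj (v$k) - cnj (w$k)) \<le> norm (v - w)" "norm (cnj (w$k) - cnj (v$k)) \<le> norm (v - w)" for k
    using calculation by (metis complex_cnj_diff complex_mod_cnj)+
  ultimately show ?thesis
    using exhaust_3[of i] exhaust_3[of j] by (auto simp: transpose_def Xmat_entries)
qed

lemma continuous_on_adj_Xmat_entry:
  assumes "continuous_on UNIV v"
  shows "continuous_on UNIV (\<lambda>x. (- transpose (Xmat uo (v x) z)) $ i $ j)"
  using continuous_on_minus[OF continuous_on_Xmat_entry[OF assms, of uo z j i]]
  by (simp add: transpose_def)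

definition adjoint_x_solution :: "real \<Rightarrow> (real \<Rightarrow> complex^2) \<Rightarrow> complex \<Rightarrow> (real \<Rightarrow> complex^3) \<Rightarrow> bool" where
  "adjoint_x_solution uo v z f \<longleftrightarrow>
     (\<forall>x. (f has_vector_derivative (- transpose (Xmat uo (v x) z) *v f x)) (at x))"

lemma adjoint_x_solution_diff:
  assumes "adjoint_x_solution uo v z f" "adjoint_x_solution uo v z g"
  shows "adjoint_x_solution uo v z (\<lambda>x. f x - g x)"
  using assms unfolding adjoint_x_solution_def
  by (auto intro: has_vector_derivative_diff[THEN has_vector_derivative_eq_rhs]
      simp: matrix_vector_mult_diff_distrib)

lemma adjoint_x_solution_scale:
  assumes "adjoint_x_solution uo v z f"
  shows "adjoint_x_solution uo v z (\<lambda>x. c *s f x)"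
  unfolding adjoint_x_solution_def vector_scalar_commute
  by (intro allI bounded_linear.has_vector_derivative[OF bounded_linear_vector_scalar_mult]
      assms[unfolded adjoint_x_solution_def, rule_format])

lemma adjoint_x_solution_unique_at_top:
  assumes "uo > 0" "norm up = uo" "z \<in> Xi1 uo" "continuous_on UNIV v"
    and L1: "(\<lambda>x. v x - up) absolutely_integrable_on {a..}"
    and f: "adjoint_x_solution uo v z f" and g: "adjoint_x_solution uo v z g"
    and f_lim: "((\<lambda>x. exp (\<i> * ph1 a1 a2 uo x t z) *s f x) \<longlongrightarrow> L) at_top"
    and g_lim: "((\<lambda>x. exp (\<i> * ph1 a1 a2 uo x t z) *s g x) \<longlongrightarrow> L) at_top"
  shows "f x = g x"
proof -
  have "z \<noteq> 0" "z^2 + of_real (uo^2) \<noteq> 0" using Xi1_nonzero assms(1,3) by auto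
  have lim: "((\<lambda>x. exp (\<i> * ph1 a1 a2 uo x t z) *s (f x - g x)) \<longlongrightarrow> 0) at_top"
    using tendsto_diff[OF f_lim g_lim] by (simp add: vector_ssub_ldistrib)
  have \<delta>_int: "(\<lambda>x. norm (v x - up)) absolutely_integrable_on {a..}"
    using L1 by (simp add: absolutely_integrable_on_def nonnegative_absolutely_integrable_1)
  have "f x - g x = 0"
  proof (rule asymptotically_diagonal_ode_eq_0_at_top[where f = "\<lambda>x. f x - g x" and x = x and Blim = "- transpose (Xmat uo up z)"
        and l = "adj_left_eigvec uo up z" and r = "adj_right_eigvec uo up z"
        and n = "adj_eigvec_pairing uo z" and \<mu> = "adj_eigval uo z" and c = "- ll uo z",
        OF _ continuous_on_adj_Xmat_entry[OF \<open>continuous_on UNIV v\<close>]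
        adj_left_eigvec_eigen[OF \<open>norm up = uo\<close> \<open>z \<noteq> 0\<close>] adj_eigvec_expansion[OF \<open>norm up = uo\<close>]
        adj_Xmat_diff_le _ \<delta>_int _ Re_adj_eigval_minus_ll_nonneg[OF \<open>z \<in> Xi1 uo\<close> \<open>uo > 0\<close>] lim])
    show "((\<lambda>x. f x - g x) has_vector_derivative (- transpose (Xmat uo (v x) z) *v (f x - g x))) (at x)" for x
      using adjoint_x_solution_diff[OF f g] by (simp add: adjoint_x_solution_def)
    show "((\<lambda>x. ph1 a1 a2 uo x t z) has_vector_derivative - ll uo z) (at x)" for x
      unfolding ph1_def by (auto intro!: derivative_eq_intros)
    show "continuous_on UNIV (\<lambda>x. norm (v x - up))"
      by (intro continuous_intros \<open>continuous_on UNIV v\<close>)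
  qed (use \<open>uo > 0\<close> \<open>z^2 + of_real (uo^2) \<noteq> 0\<close> in simp_all)
  then show ?thesis by simp
qed

lemma adjoint_x_solution_unique_at_bot:
  assumes "uo > 0" "norm um = uo" "z \<in> Xi1 uo" "continuous_on UNIV v"
    and L1: "(\<lambda>x. v x - um) absolutely_integrable_on {..a}"
    and f: "adjoint_x_solution uo v z f" and g: "adjoint_x_solution uo v z g"
    and f_lim: "((\<lambda>x. exp (\<i> * ph2 a1 a2 uo x t z) *s f x) \<longlongrightarrow> L) at_bot"
    and g_lim: "((\<lambda>x. exp (\<i> * ph2 a1 a2 uo x t z) *s g x) \<longlongrightarrow> L) at_bot"
  shows "f x = g x"
proof -
  have "z \<noteq> 0" "z^2 + of_real (uo^2) \<noteq> 0" using Xi1_nonzero assms(1,3) by auto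
  have lim: "((\<lambda>x. exp (\<i> * ph2 a1 a2 uo x t z) *s (f x - g x)) \<longlongrightarrow> 0) at_bot"
    using tendsto_diff[OF f_lim g_lim] by (simp add: vector_ssub_ldistrib)
  have \<delta>_int: "(\<lambda>x. norm (v x - um)) absolutely_integrable_on {..a}"
    using L1 by (simp add: absolutely_integrable_on_def nonnegative_absolutely_integrable_1)
  have "f x - g x = 0"
  proof (rule asymptotically_diagonal_ode_eq_0_at_bot[where f = "\<lambda>x. f x - g x" and x = x and Blim = "- transpose (Xmat uo um z)"
        and l = "adj_left_eigvec uo um z" and r = "adj_right_eigvec uo um z"
        and n = "adj_eigvec_pairing uo z" and \<mu> = "adj_eigval uo z" and c = "kk uo z",
        OF _ continuous_on_adj_Xmat_entry[OF \<open>continuous_on UNIV v\<close>]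
        adj_left_eigvec_eigen[OF \<open>norm um = uo\<close> \<open>z \<noteq> 0\<close>] adj_eigvec_expansion[OF \<open>norm um = uo\<close>]
        adj_Xmat_diff_le _ \<delta>_int _ Re_adj_eigval_plus_kk_nonpos[OF \<open>z \<in> Xi1 uo\<close>] lim])
    show "((\<lambda>x. f x - g x) has_vector_derivative (- transpose (Xmat uo (v x) z) *v (f x - g x))) (at x)" for x
      using adjoint_x_solution_diff[OF f g] by (simp add: adjoint_x_solution_def)
    show "((\<lambda>x. ph2 a1 a2 uo x t z) has_vector_derivative kk uo z) (at x)" for x
      unfolding ph2_def by (auto intro!: derivative_eq_intros)
    show "continuous_on UNIV (\<lambda>x. norm (v x - um))"
      by (intro continuous_intros \<open>continuous_on UNIV v\<close>)
  qed (use \<open>uo > 0\<close> \<open>z^2 + of_real (uo^2) \<noteq> 0\<close> in simp_all)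
  then show ?thesis by simp
qed

section \<open>Jost columns\<close>

lemma jost_col_conj_adjoint:
  assumes J: "jost_col a1 a2 uo u ux uxx w F l R phi" and "cnj z \<in> R"
  shows "adjoint_x_solution uo (\<lambda>x. u x t) z (\<lambda>x. vcnj (phi x t (cnj z)))"
    and "((\<lambda>x. exp (\<i> * phase a1 a2 uo l x t z) *s vcnj (phi x t (cnj z))) \<longlongrightarrow> col3 l (Gtmat uo w z)) F"
proof -
  have deriv: "((\<lambda>y. phi y t (cnj z)) has_vector_derivative (Xmat uo (u x t) (cnj z) *v phi x t (cnj z))) (at x)"
    and lim: "((\<lambda>x. exp (- \<i> * phase a1 a2 uo l x t (cnj z)) *s phi x t (cnj z)) \<longlongrightarrow> col3 l (Gmat uo w (cnj z))) F"
    for x using assms unfolding jost_col_def lax_sol_def by auto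
  show "adjoint_x_solution uo (\<lambda>x. u x t) z (\<lambda>x. vcnj (phi x t (cnj z)))"
    unfolding adjoint_x_solution_def
    using bounded_linear.has_vector_derivative[OF bounded_linear_vcnj deriv] by (simp add: vcnj_Xmat_cnj)
  have "vcnj (col3 l (Gmat uo w (cnj z))) = col3 l (Gtmat uo w z)"
    by (simp add: col3_def Gtmat_def vec_eq_iff)
  then show "((\<lambda>x. exp (\<i> * phase a1 a2 uo l x t z) *s vcnj (phi x t (cnj z))) \<longlongrightarrow> col3 l (Gtmat uo w z)) F"
    using bounded_linear.tendsto[OF bounded_linear_vcnj lim] by (simp add: vcnj_scale exp_cnj phase_cnj)
qed

lemma adj_jost_col_adjoint:
  assumes "adj_jost_col a1 a2 uo u ux uxx w F l R psi" and "z \<in> R"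
  shows "adjoint_x_solution uo (\<lambda>x. u x t) z (\<lambda>x. psi x t z)"
    and "((\<lambda>x. exp (\<i> * phase a1 a2 uo l x t z) *s psi x t z) \<longlongrightarrow> col3 l (Gtmat uo w z)) F"
  using assms unfolding adj_jost_col_def adj_lax_sol_def adjoint_x_solution_def by auto

lemma Gtmat_col3_reflect:
  assumes "z \<noteq> 0" "uo \<noteq> 0"
  shows "col3 3 (Gtmat uo v (- of_real (uo^2) / z)) = (- \<i> * z / of_real uo) *s col3 1 (Gtmat uo v z)"
  using assms by (simp add: col3_def Gtmat_def Gmat_def vec_eq_iff forall_3 field_simps power2_eq_square)

lemma Gtmat_col2_const: "col3 2 (Gtmat uo v z) = col3 2 (Gtmat uo v z')"
  by (simp add: col3_def Gtmat_def Gmat_def vec_eq_iff forall_3)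

lemma Gmat_col1_nonzero: "col3 1 (Gmat uo w z) \<noteq> 0"
proof
  assume "col3 1 (Gmat uo w z) = 0"
  then have "col3 1 (Gmat uo w z) $ 1 = 0" by simp
  then show False by (simp add: col3_def Gmat_def)
qed

lemma Gmat_col2_nonzero:
  assumes "w \<noteq> 0" "uo \<noteq> 0"
  shows "col3 2 (Gmat uo w z) \<noteq> 0"
  using assms by (auto simp: col3_def Gmat_def vperp_def vec_eq_iff forall_2 forall_3)

lemma jost_col_nonzero:
  assumes "jost_col a1 a2 uo u ux uxx w F l R phi" "z \<in> R" "F \<noteq> bot" "col3 l (Gmat uo w z) \<noteq> 0"
  obtains x where "phi x t z \<noteq> 0"
proof (rule ccontr)
  assume "\<not> thesis"
  with that have "phi x t z = 0" for x by blast
  moreover have "((\<lambda>x. exp (- \<i> * phase a1 a2 uo l x t z) *s phi x t z) \<longlongrightarrow> col3 l (Gmat uo w z)) F"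
    using assms(1,2) unfolding jost_col_def by blast
  ultimately have "((\<lambda>x. 0) \<longlongrightarrow> col3 l (Gmat uo w z)) F"
    by simp
  then show False
    using tendsto_unique[OF assms(3) _ tendsto_const] assms(4) by blast
qed

locale nonzero_background_potential =
  fixes uo :: real and u :: "real \<Rightarrow> real \<Rightarrow> complex^2" and um up :: "complex^2"
  assumes uo_pos: "uo > 0" and norm_um: "norm um = uo" and norm_up: "norm up = uo"
    and continuous_u: "\<And>t. continuous_on UNIV (\<lambda>x. u x t)"
    and L1_minus: "\<And>t. (\<lambda>x. u x t - um) absolutely_integrable_on {..0}"
    and L1_plus: "\<And>t. (\<lambda>x. u x t - up) absolutely_integrable_on {0..}"
begin

lemma adjoint_solution_unique_at_top:
  assumes "z \<in> Xi1 uo"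
    and "adjoint_x_solution uo (\<lambda>x. u x t) z f" "adjoint_x_solution uo (\<lambda>x. u x t) z g"
    and "((\<lambda>x. exp (\<i> * phase a1 a2 uo 1 x t z) *s f x) \<longlongrightarrow> L) at_top"
    and "((\<lambda>x. exp (\<i> * phase a1 a2 uo 1 x t z) *s g x) \<longlongrightarrow> L) at_top"
  shows "f x = g x"
  using adjoint_x_solution_unique_at_top[OF uo_pos norm_up \<open>z \<in> Xi1 uo\<close> continuous_u L1_plus] assms
  by simp

lemma adjoint_solution_unique_at_bot:
  assumes "z \<in> Xi1 uo"
    and "adjoint_x_solution uo (\<lambda>x. u x t) z f" "adjoint_x_solution uo (\<lambda>x. u x t) z g"
    and "((\<lambda>x. exp (\<i> * phase a1 a2 uo 2 x t z) *s f x) \<longlongrightarrow> L) at_bot"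
    and "((\<lambda>x. exp (\<i> * phase a1 a2 uo 2 x t z) *s g x) \<longlongrightarrow> L) at_bot"
  shows "f x = g x"
  using adjoint_x_solution_unique_at_bot[OF uo_pos norm_um \<open>z \<in> Xi1 uo\<close> continuous_u L1_minus] assms
  by simp

lemma adjoint_solution_reflect_col3:
  assumes z: "z \<in> Xi1 uo"
    and f: "adjoint_x_solution uo (\<lambda>x. u x t) (- of_real (uo^2) / z) f"
    and g: "adjoint_x_solution uo (\<lambda>x. u x t) z g"
    and f_lim: "((\<lambda>x. exp (\<i> * phase a1 a2 uo 3 x t (- of_real (uo^2) / z)) *s f x)
                  \<longlongrightarrow> col3 3 (Gtmat uo up (- of_real (uo^2) / z))) at_top"
    and g_lim: "((\<lambda>x. exp (\<i> * phase a1 a2 uo 1 x t z) *s g x) \<longlongrightarrow> col3 1 (Gtmat uo up z)) at_top"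
  shows "f x = (- \<i> * z / of_real uo) *s g x"
proof (rule adjoint_solution_unique_at_top[OF z, where f = f and g = "\<lambda>x. (- \<i> * z / of_real uo) *s g x"])
  have "z \<noteq> 0" "uo \<noteq> 0" using Xi1_nonzero[OF z uo_pos] uo_pos by auto
  show "adjoint_x_solution uo (\<lambda>x. u x t) z f"
    using f unfolding adjoint_x_solution_def Xmat_reflect[OF \<open>z \<noteq> 0\<close> \<open>uo \<noteq> 0\<close>] .
  show "adjoint_x_solution uo (\<lambda>x. u x t) z (\<lambda>x. (- \<i> * z / of_real uo) *s g x)"
    by (rule adjoint_x_solution_scale[OF g])
  show "((\<lambda>x. exp (\<i> * phase a1 a2 uo 1 x t z) *s f x)
          \<longlongrightarrow> (- \<i> * z / of_real uo) *s col3 1 (Gtmat uo up z)) at_top"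
    using f_lim
    unfolding phase_simps ph1_reflect[OF \<open>z \<noteq> 0\<close> \<open>uo \<noteq> 0\<close>] Gtmat_col3_reflect[OF \<open>z \<noteq> 0\<close> \<open>uo \<noteq> 0\<close>]
    by simp
  show "((\<lambda>x. exp (\<i> * phase a1 a2 uo 1 x t z) *s ((- \<i> * z / of_real uo) *s g x))
          \<longlongrightarrow> (- \<i> * z / of_real uo) *s col3 1 (Gtmat uo up z)) at_top"
    using bounded_linear.tendsto[OF bounded_linear_vector_scalar_mult[of "- \<i> * z / of_real uo"] g_lim]
    by (simp only: vector_smult_assoc mult.commute)
qed

lemma adjoint_solution_reflect_col2:
  assumes z: "z \<in> Xi1 uo"
    and f: "adjoint_x_solution uo (\<lambda>x. u x t) (- of_real (uo^2) / z) f"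
    and g: "adjoint_x_solution uo (\<lambda>x. u x t) z g"
    and f_lim: "((\<lambda>x. exp (\<i> * phase a1 a2 uo 2 x t (- of_real (uo^2) / z)) *s f x)
                  \<longlongrightarrow> col3 2 (Gtmat uo um (- of_real (uo^2) / z))) at_bot"
    and g_lim: "((\<lambda>x. exp (\<i> * phase a1 a2 uo 2 x t z) *s g x) \<longlongrightarrow> col3 2 (Gtmat uo um z)) at_bot"
  shows "f x = g x"
proof (rule adjoint_solution_unique_at_bot[OF z _ g _ g_lim])
  have "z \<noteq> 0" "uo \<noteq> 0" using Xi1_nonzero[OF z uo_pos] uo_pos by auto
  show "adjoint_x_solution uo (\<lambda>x. u x t) z f"
    using f unfolding adjoint_x_solution_def Xmat_reflect[OF \<open>z \<noteq> 0\<close> \<open>uo \<noteq> 0\<close>] .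
  show "((\<lambda>x. exp (\<i> * phase a1 a2 uo 2 x t z) *s f x) \<longlongrightarrow> col3 2 (Gtmat uo um z)) at_bot"
    using f_lim
    unfolding phase_simps ph2_reflect[OF \<open>z \<noteq> 0\<close> \<open>uo \<noteq> 0\<close>] Gtmat_col2_const[of _ _ "- of_real (uo^2) / z" z] .
qed

lemma jost_symmetries:
  assumes J_M2: "jost_col a1 a2 uo u ux uxx um at_bot 2 {z. Im z < 0} phiM2"
    and J_P1: "jost_col a1 a2 uo u ux uxx up at_top 1 (Xi2 uo) phiP1"
    and J_P3: "jost_col a1 a2 uo u ux uxx up at_top 3 (Xi3 uo) phiP3"
    and A_P1: "adj_jost_col a1 a2 uo u ux uxx up at_top 1 (Xi1 uo) psiP1"
    and A_M2: "adj_jost_col a1 a2 uo u ux uxx um at_bot 2 {z. Im z > 0} psiM2"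
    and A_P3: "adj_jost_col a1 a2 uo u ux uxx up at_top 3 (Xi4 uo) psiP3"
    and z: "z \<in> Xi1 uo"
  defines "w \<equiv> - of_real (uo^2) / z" and "\<alpha> \<equiv> - \<i> * z / of_real uo"
  shows "psiP1 x t z = vcnj (phiP1 x t (cnj z))"
    and "psiM2 x t z = vcnj (phiM2 x t (cnj z))"
    and "psiP3 x t w = \<alpha> *s psiP1 x t z"
    and "psiM2 x t w = psiM2 x t z"
    and "phiP3 x t (cnj w) = cnj \<alpha> *s phiP1 x t (cnj z)"
    and "phiM2 x t (cnj w) = phiM2 x t (cnj z)"
proof -
  have "Im z > 0" using z by (simp add: Xi1_def)
  then have cz: "cnj z \<in> Xi2 uo" and z_upper: "z \<in> {z. Im z > 0}" and cz_lower: "cnj z \<in> {z. Im z < 0}"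
    using z by (simp_all add: Xi1_def Xi2_def)
  have w: "- of_real (uo^2) / z \<in> Xi4 uo" and cw: "cnj (- of_real (uo^2) / z) \<in> Xi3 uo"
    using Xi1_reflect[OF z uo_pos] by simp_all
  then have w_upper: "- of_real (uo^2) / z \<in> {z. Im z > 0}"
    and cw_lower: "cnj (- of_real (uo^2) / z) \<in> {z. Im z < 0}"
    by (simp_all add: Xi3_def Xi4_def del: Im_divide)
  note adj = adj_jost_col_adjoint and conj = jost_col_conj_adjoint
  show "psiP1 x t z = vcnj (phiP1 x t (cnj z))"
    by (rule adjoint_solution_unique_at_top[OF z adj(1)[OF A_P1 z] conj(1)[OF J_P1 cz]
          adj(2)[OF A_P1 z] conj(2)[OF J_P1 cz]])
  show "psiM2 x t z = vcnj (phiM2 x t (cnj z))"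
    by (rule adjoint_solution_unique_at_bot[OF z adj(1)[OF A_M2 z_upper] conj(1)[OF J_M2 cz_lower]
          adj(2)[OF A_M2 z_upper] conj(2)[OF J_M2 cz_lower]])
  show "psiP3 x t w = \<alpha> *s psiP1 x t z"
    unfolding w_def \<alpha>_def
    by (rule adjoint_solution_reflect_col3[OF z adj(1)[OF A_P3 w] adj(1)[OF A_P1 z]
          adj(2)[OF A_P3 w] adj(2)[OF A_P1 z]])
  show "psiM2 x t w = psiM2 x t z"
    unfolding w_def
    by (rule adjoint_solution_reflect_col2[OF z adj(1)[OF A_M2 w_upper] adj(1)[OF A_M2 z_upper]
          adj(2)[OF A_M2 w_upper] adj(2)[OF A_M2 z_upper]])
  have "vcnj (phiP3 x t (cnj w)) = \<alpha> *s vcnj (phiP1 x t (cnj z))"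
    unfolding w_def \<alpha>_def
    by (rule adjoint_solution_reflect_col3[OF z conj(1)[OF J_P3 cw] conj(1)[OF J_P1 cz]
          conj(2)[OF J_P3 cw] conj(2)[OF J_P1 cz]])
  from arg_cong[OF this, of vcnj] show "phiP3 x t (cnj w) = cnj \<alpha> *s phiP1 x t (cnj z)"
    by (simp add: vcnj_scale)
  have "vcnj (phiM2 x t (cnj w)) = vcnj (phiM2 x t (cnj z))"
    unfolding w_def
    by (rule adjoint_solution_reflect_col2[OF z conj(1)[OF J_M2 cw_lower] conj(1)[OF J_M2 cz_lower]
          conj(2)[OF J_M2 cw_lower] conj(2)[OF J_M2 cz_lower]])
  from arg_cong[OF this, of vcnj] show "phiM2 x t (cnj w) = phiM2 x t (cnj z)"
    by simp
qed

lemma jost_cross3c_eq_0_iff_proportional: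
  assumes J_M2: "jost_col a1 a2 uo u ux uxx um at_bot 2 {z. Im z < 0} phiM2"
    and J_P1: "jost_col a1 a2 uo u ux uxx up at_top 1 (Xi2 uo) phiP1"
    and z: "z \<in> Xi1 uo"
  shows "(\<forall>x t. cross3c (phiP1 x t (cnj z)) (phiM2 x t (cnj z)) = 0) \<longleftrightarrow>
         (\<exists>c. c \<noteq> 0 \<and> (\<forall>x t. phiM2 x t (cnj z) = c *s phiP1 x t (cnj z)))"
proof (rule lax_sol_cross3c_eq_0_iff_proportional[OF _ _ continuous_u])
  have cz: "cnj z \<in> Xi2 uo" and cz_lower: "cnj z \<in> {z. Im z < 0}"
    using z by (simp_all add: Xi1_def Xi2_def)
  show "lax_sol a1 a2 uo u ux uxx (cnj z) (\<lambda>x t. phiP1 x t (cnj z))"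
    and "lax_sol a1 a2 uo u ux uxx (cnj z) (\<lambda>x t. phiM2 x t (cnj z))"
    using J_P1 J_M2 cz cz_lower unfolding jost_col_def by blast+
  show "\<exists>x. phiP1 x t (cnj z) \<noteq> 0" for t
    by (rule jost_col_nonzero[OF J_P1 cz _ Gmat_col1_nonzero]) auto
  have "um \<noteq> 0" "uo \<noteq> 0" using norm_um uo_pos by auto
  then show "\<exists>x t. phiM2 x t (cnj z) \<noteq> 0"
    using jost_col_nonzero[OF J_M2 cz_lower _ Gmat_col2_nonzero] by fastforce
qed

end

theorem proposition7:
  fixes a1 a2 uo hp hm :: real
    and uvec :: "complex^2"
    and u ux uxx uxxx ut :: "real \<Rightarrow> real \<Rightarrow> complex^2"
    and phiM2 phiP1 phiP3 psiP1 psiM2 psiP3 :: "real \<Rightarrow> real \<Rightarrow> complex \<Rightarrow> complex^3"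
    and zo :: complex
  defines "up \<equiv> exp (\<i> * of_real hp) *s uvec"
      and "um \<equiv> exp (\<i> * of_real hm) *s uvec"
  assumes uo_pos: "uo > 0"
    and uvec_norm: "norm uvec = uo"
    and pde: "is_solution a1 a2 uo u ux uxx uxxx ut"
    and bc_minus: "\<forall>t. ((\<lambda>x. u x t) \<longlongrightarrow> um) at_bot"
    and bc_plus: "\<forall>t. ((\<lambda>x. u x t) \<longlongrightarrow> up) at_top"
    and L1_minus: "\<forall>t a. (\<lambda>x. u x t - um) absolutely_integrable_on {..a}"
    and L1_plus: "\<forall>t a. (\<lambda>x. u x t - up) absolutely_integrable_on {a..}"
    and J_M2: "jost_col a1 a2 uo u ux uxx um at_bot 2 {z. Im z < 0} phiM2"
    and J_P1: "jost_col a1 a2 uo u ux uxx up at_top 1 (Xi2 uo) phiP1"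
    and J_P3: "jost_col a1 a2 uo u ux uxx up at_top 3 (Xi3 uo) phiP3"
    and A_P1: "adj_jost_col a1 a2 uo u ux uxx up at_top 1 (Xi1 uo) psiP1"
    and A_M2: "adj_jost_col a1 a2 uo u ux uxx um at_bot 2 {z. Im z > 0} psiM2"
    and A_P3: "adj_jost_col a1 a2 uo u ux uxx up at_top 3 (Xi4 uo) psiP3"
    and zo_in: "zo \<in> Xi1 uo"
  defines "rho1 \<equiv> (\<lambda>x t z. exp (\<i> * ph2 a1 a2 uo x t z) *s cross3c (psiP1 x t z) (psiM2 x t z))"
      and "rho4 \<equiv> (\<lambda>x t z. exp (\<i> * ph2 a1 a2 uo x t z) *s cross3c (psiM2 x t z) (psiP3 x t z))"
  shows
    "((\<forall>x t. rho1 x t zo = 0) \<longleftrightarrow> (\<forall>x t. rho4 x t (- of_real (uo^2) / zo) = 0))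
   \<and> ((\<forall>x t. rho1 x t zo = 0) \<longleftrightarrow>
        (\<exists>c. c \<noteq> 0 \<and> (\<forall>x t. phiM2 x t (cnj zo) = c *s phiP1 x t (cnj zo))))
   \<and> ((\<forall>x t. rho1 x t zo = 0) \<longleftrightarrow>
        (\<exists>c. c \<noteq> 0 \<and> (\<forall>x t. phiM2 x t (- of_real (uo^2) / cnj zo)
                              = c *s phiP3 x t (- of_real (uo^2) / cnj zo))))"
proof -
  have "continuous_on UNIV (\<lambda>x. u x t)" for t
    using pde unfolding is_solution_def by (intro continuous_on_vector_derivative) blast
  then interpret nonzero_background_potential uo u um up
    using uo_pos uvec_norm L1_minus L1_plus
    by unfold_locales (simp_all add: um_def up_def norm_vector_scalar_mult)
  define w where "w = - of_real (uo^2) / zo"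
  define \<alpha> where "\<alpha> = - \<i> * zo / of_real uo"
  have "zo \<noteq> 0" using Xi1_nonzero[OF zo_in uo_pos] by simp
  then have "\<alpha> \<noteq> 0" using uo_pos by (simp add: \<alpha>_def)
  have "ph2 a1 a2 uo x t w = ph2 a1 a2 uo x t zo" for x t
    unfolding w_def using \<open>zo \<noteq> 0\<close> uo_pos by (intro ph2_reflect) auto
  note sym = jost_symmetries[OF J_M2 J_P1 J_P3 A_P1 A_M2 A_P3 zo_in, folded w_def \<alpha>_def]
  have rho1: "rho1 x t zo = exp (\<i> * ph2 a1 a2 uo x t zo) *s
      vcnj (cross3c (phiP1 x t (cnj zo)) (phiM2 x t (cnj zo)))" for x t
    by (simp add: rho1_def sym cross3c_vcnj)
  have rho4: "rho4 x t w = - \<alpha> *s rho1 x t zo" for x t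
    by (simp add: rho4_def rho1_def sym(3,4) \<open>ph2 a1 a2 uo x t w = ph2 a1 a2 uo x t zo\<close>
        cross3c_scale_right cross3c_commute[of "psiM2 x t zo"] vector_smult_assoc mult.commute)
  have "cnj w = - of_real (uo^2) / cnj zo" by (simp add: w_def)
  then show ?thesis
    using rho1 rho4 sym(5,6) \<open>\<alpha> \<noteq> 0\<close> jost_cross3c_eq_0_iff_proportional[OF J_M2 J_P1 zo_in]
      ex_nonzero_proportional_rescale[of "cnj \<alpha>" "\<lambda>x t. phiM2 x t (cnj zo)" "\<lambda>x t. phiP1 x t (cnj zo)"]
    by (simp add: w_def)
qed

end
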